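(* Let $(R,\mathfrak m)$ be a Noetherian local ring, $J$ an $\mathfrak m$-primary ideal, and $I=(f_1,\dots,f_r)$ where $f_1,\dots,f_r$ is a filter-regular sequence. Let $p$ be the Hilbert perturbation index of $R/I$ with respect to $J$, and $N=\max\{p,\operatorname{ar}_J(I)+1\}$. Then $\operatorname{gr}_J(R/I)\cong\operatorname{gr}_J(R/I')$ for all ideals $I'=(f_1',\dots,f_r')$ with $f_i'-f_i\in J^N$, $i=1,\dots,r$.
   Context: A sequence is filter-regular if for each $i$, $f_i\notin\mathfrak p$ for every associated prime $\mathfrak p\ne\mathfrak m$ of $R/(f_1,\dots,f_{i-1})$. The Hilbert perturbation index of $R/I$ with respect to $J$ is the least number $p$ such that for every $f_1',\dots,f_r'$ with $f_i'\equiv f_i\bmod J^p$ and $I'=(f_1',\dots,f_r')$, one has $\ell(R/(I+J^n))=\ell(R/(I'+J^n))$ for all $n\ge0$. $\operatorname{ar}_J(I)$ is the least $c$ with $J^n\cap I=J^{n-c}(J^c\cap I)$ for all $n\ge c$. $\operatorname{gr}_J(R/I)=\bigoplus_n(J^n+I)/(J^{n+1}+I)$. *)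

theory Defs
  imports Main "HOL-Library.Extended_Nat"
begin

definition is_ideal :: "'a::comm_ring_1 set \<Rightarrow> bool" where
  "is_ideal I \<longleftrightarrow> 0 \<in> I \<and> (\<forall>x\<in>I. \<forall>y\<in>I. x + y \<in> I) \<and> (\<forall>r. \<forall>x\<in>I. r * x \<in> I)"

definition ideal_gen :: "'a::comm_ring_1 set \<Rightarrow> 'a set" where
  "ideal_gen S = \<Inter>{I. is_ideal I \<and> S \<subseteq> I}"

definition ideal_of_list :: "'a::comm_ring_1 list \<Rightarrow> 'a set" where
  "ideal_of_list fs = ideal_gen (set fs)"

definition ideal_sum :: "'a::comm_ring_1 set \<Rightarrow> 'a set \<Rightarrow> 'a set" where
  "ideal_sum A B = {a + b | a b. a \<in> A \<and> b \<in> B}"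

definition ideal_prod :: "'a::comm_ring_1 set \<Rightarrow> 'a set \<Rightarrow> 'a set" where
  "ideal_prod A B = ideal_gen {a * b | a b. a \<in> A \<and> b \<in> B}"

primrec ideal_pow :: "'a::comm_ring_1 set \<Rightarrow> nat \<Rightarrow> 'a set" where
  "ideal_pow J 0 = UNIV"
| "ideal_pow J (Suc n) = ideal_prod J (ideal_pow J n)"

definition prime_ideal :: "'a::comm_ring_1 set \<Rightarrow> bool" where
  "prime_ideal P \<longleftrightarrow> is_ideal P \<and> P \<noteq> UNIV \<and> (\<forall>a b. a * b \<in> P \<longrightarrow> a \<in> P \<or> b \<in> P)"

definition maximal_ideal :: "'a::comm_ring_1 set \<Rightarrow> bool" where
  "maximal_ideal M \<longleftrightarrow> is_ideal M \<and> M \<noteq> UNIV \<and>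
     (\<forall>I. is_ideal I \<and> M \<subseteq> I \<longrightarrow> I = M \<or> I = UNIV)"

definition noetherian_ring :: "'a::comm_ring_1 itself \<Rightarrow> bool" where
  "noetherian_ring _ \<longleftrightarrow> (\<forall>I::'a set. is_ideal I \<longrightarrow> (\<exists>S. finite S \<and> I = ideal_gen S))"

definition local_ring_max :: "'a::comm_ring_1 set \<Rightarrow> bool" where
  "local_ring_max m \<longleftrightarrow> maximal_ideal m \<and> (\<forall>M. maximal_ideal M \<longrightarrow> M = m)"

definition ideal_radical :: "'a::comm_ring_1 set \<Rightarrow> 'a set" where
  "ideal_radical I = {x. \<exists>n. x ^ n \<in> I}"

definition primary_ideal :: "'a::comm_ring_1 set \<Rightarrow> bool" where
  "primary_ideal Q \<longleftrightarrow> is_ideal Q \<and> Q \<noteq> UNIV \<and>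
     (\<forall>a b. a * b \<in> Q \<and> a \<notin> Q \<longrightarrow> (\<exists>n. b ^ n \<in> Q))"

definition m_primary :: "'a::comm_ring_1 set \<Rightarrow> 'a set \<Rightarrow> bool" where
  "m_primary m Q \<longleftrightarrow> primary_ideal Q \<and> ideal_radical Q = m"

definition ideal_colon :: "'a::comm_ring_1 set \<Rightarrow> 'a \<Rightarrow> 'a set" where
  "ideal_colon K x = {r. r * x \<in> K}"

definition assoc_primes :: "'a::comm_ring_1 set \<Rightarrow> 'a set set" where
  "assoc_primes K = {P. prime_ideal P \<and> (\<exists>x. P = ideal_colon K x)}"

(* f_1,...,f_r (here the list fs, 0-indexed) is filter-regular w.r.t. the maximal ideal m *)
definition filter_regular :: "'a::comm_ring_1 set \<Rightarrow> 'a list \<Rightarrow> bool" where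
  "filter_regular m fs \<longleftrightarrow>
     (\<forall>i < length fs. \<forall>P \<in> assoc_primes (ideal_of_list (take i fs)).
        P \<noteq> m \<longrightarrow> fs ! i \<notin> P)"

(* length of the R-module R/K: supremum of lengths n of strict chains of ideals
   K = I_0 \<subset> I_1 \<subset> ... \<subset> I_n = R  (submodules of R/K correspond to ideals containing K) *)
definition quot_length :: "'a::comm_ring_1 set \<Rightarrow> enat" where
  "quot_length K = Sup {enat n | n. \<exists>C :: nat \<Rightarrow> 'a set.
       C 0 = K \<and> C n = UNIV \<and> (\<forall>i\<le>n. is_ideal (C i)) \<and> (\<forall>i<n. C i \<subset> C (Suc i))}"

definition perturbation :: "'a::comm_ring_1 set \<Rightarrow> 'a list \<Rightarrow> 'a list \<Rightarrow> bool" where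
  "perturbation Q fs fs' \<longleftrightarrow> length fs' = length fs \<and> (\<forall>i < length fs. fs' ! i - fs ! i \<in> Q)"

definition hpi_property :: "'a::comm_ring_1 set \<Rightarrow> 'a list \<Rightarrow> nat \<Rightarrow> bool" where
  "hpi_property J fs p \<longleftrightarrow> (\<forall>fs'. perturbation (ideal_pow J p) fs fs' \<longrightarrow>
      (\<forall>n. quot_length (ideal_sum (ideal_of_list fs) (ideal_pow J n))
           = quot_length (ideal_sum (ideal_of_list fs') (ideal_pow J n))))"

definition hilbert_perturbation_index :: "'a::comm_ring_1 set \<Rightarrow> 'a list \<Rightarrow> nat \<Rightarrow> bool" where
  "hilbert_perturbation_index J fs p \<longleftrightarrow> hpi_property J fs p \<and> (\<forall>q. hpi_property J fs q \<longrightarrow> p \<le> q)"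

definition artin_rees_number :: "'a::comm_ring_1 set \<Rightarrow> 'a set \<Rightarrow> nat" where
  "artin_rees_number J I = (LEAST c. \<forall>n\<ge>c.
      ideal_pow J n \<inter> I = ideal_prod (ideal_pow J (n - c)) (ideal_pow J c \<inter> I))"

definition coset :: "'a::comm_ring_1 \<Rightarrow> 'a set \<Rightarrow> 'a set" where
  "coset x K = {x + y | y. y \<in> K}"

(* degree-n component of gr_J(R/I) = (J^n + I)/(J^(n+1) + I), as a set of cosets *)
definition gr_class :: "'a::comm_ring_1 set \<Rightarrow> 'a set \<Rightarrow> nat \<Rightarrow> 'a \<Rightarrow> 'a set" where
  "gr_class J I n x = coset x (ideal_sum (ideal_pow J (Suc n)) I)"

definition gr_comp :: "'a::comm_ring_1 set \<Rightarrow> 'a set \<Rightarrow> nat \<Rightarrow> 'a set set" where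
  "gr_comp J I n = gr_class J I n ` ideal_sum (ideal_pow J n) I"

(* isomorphism of graded rings gr_J(R/I) \<cong> gr_J(R/I'): a family of degree-wise bijections
   that is additive in each degree, multiplicative across degrees and preserves 1 *)
definition gr_iso :: "'a::comm_ring_1 set \<Rightarrow> 'a set \<Rightarrow> 'a set \<Rightarrow> bool" where
  "gr_iso J I I' \<longleftrightarrow> (\<exists>\<phi> :: nat \<Rightarrow> 'a set \<Rightarrow> 'a set.
     (\<forall>n. bij_betw (\<phi> n) (gr_comp J I n) (gr_comp J I' n)) \<and>
     (\<forall>n x y x' y'. x \<in> ideal_sum (ideal_pow J n) I \<and> y \<in> ideal_sum (ideal_pow J n) I \<and>
         x' \<in> ideal_sum (ideal_pow J n) I' \<and> y' \<in> ideal_sum (ideal_pow J n) I' \<and>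
         \<phi> n (gr_class J I n x) = gr_class J I' n x' \<and> \<phi> n (gr_class J I n y) = gr_class J I' n y'
       \<longrightarrow> \<phi> n (gr_class J I n (x + y)) = gr_class J I' n (x' + y')) \<and>
     (\<forall>m n x y x' y'. x \<in> ideal_sum (ideal_pow J m) I \<and> y \<in> ideal_sum (ideal_pow J n) I \<and>
         x' \<in> ideal_sum (ideal_pow J m) I' \<and> y' \<in> ideal_sum (ideal_pow J n) I' \<and>
         \<phi> m (gr_class J I m x) = gr_class J I' m x' \<and> \<phi> n (gr_class J I n y) = gr_class J I' n y'
       \<longrightarrow> \<phi> (m + n) (gr_class J I (m + n) (x * y)) = gr_class J I' (m + n) (x' * y')) \<and>
     \<phi> 0 (gr_class J I 0 1) = gr_class J I' 0 1)"

end

theory Submission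
  imports Defs "HOL-Computational_Algebra.Polynomial"
begin

(* Both graded pieces of degree n are quotients of J^n, by the slices J^n \<inter> (J^(n+1) + I) and
   J^n \<inter> (J^(n+1) + I'), so it suffices to show that these coincide. With c = ar_J(I), Artin--Rees
   gives J^n \<inter> I = J^(n-c) (J^c \<inter> I); moving the generators of I by elements of J^N with N > c
   changes such products only modulo J^(n+1), whence J^n \<inter> I \<subseteq> J^(n+1) + I' and the slice of I lies
   in that of I'. Since N \<ge> p, the lengths of R/(J^n + I) and R/(J^n + I') agree for all n, and they
   are finite because J is m-primary. A proper inclusion of slices would make
   (J^n + I)/(J^(n+1) + I) longer than (J^n + I')/(J^(n+1) + I'), so the slices are equal. *)

section \<open>Ideals\<close>

lemma is_idealI:
  assumes "0 \<in> I" "\<And>x y. x \<in> I \<Longrightarrow> y \<in> I \<Longrightarrow> x + y \<in> I" "\<And>r x. x \<in> I \<Longrightarrow> r * x \<in> I"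
  shows "is_ideal I"
  using assms unfolding is_ideal_def by blast

lemma ideal_zero: "is_ideal I \<Longrightarrow> 0 \<in> I"
  unfolding is_ideal_def by blast

lemma ideal_add: "is_ideal I \<Longrightarrow> x \<in> I \<Longrightarrow> y \<in> I \<Longrightarrow> x + y \<in> I"
  unfolding is_ideal_def by blast

lemma ideal_mult_left: "is_ideal I \<Longrightarrow> x \<in> I \<Longrightarrow> r * x \<in> I"
  unfolding is_ideal_def by blast

lemma ideal_mult_right: "is_ideal I \<Longrightarrow> x \<in> I \<Longrightarrow> x * r \<in> I"
  using ideal_mult_left[of I x r] by (simp add: mult.commute)

lemma ideal_uminus: "is_ideal I \<Longrightarrow> x \<in> I \<Longrightarrow> - x \<in> I"
  using ideal_mult_left[of I x "-1"] by simp

lemma ideal_diff: "is_ideal I \<Longrightarrow> x \<in> I \<Longrightarrow> y \<in> I \<Longrightarrow> x - y \<in> I"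
  using ideal_add[of I x "-y"] ideal_uminus[of I y] by simp

lemma ideal_sum_closed: "is_ideal I \<Longrightarrow> (\<And>i. i \<in> A \<Longrightarrow> f i \<in> I) \<Longrightarrow> sum f A \<in> I"
  by (induction A rule: infinite_finite_induct) (auto intro: ideal_zero ideal_add)

lemma ideal_UNIV: "is_ideal UNIV"
  by (rule is_idealI) auto

lemma ideal_Int: "is_ideal I \<Longrightarrow> is_ideal K \<Longrightarrow> is_ideal (I \<inter> K)"
  unfolding is_ideal_def by blast

lemma ideal_eq_UNIV_if_one: "is_ideal I \<Longrightarrow> 1 \<in> I \<Longrightarrow> I = UNIV"
  using ideal_mult_left[of I 1] by force

lemma ideal_colon_ideal: "is_ideal K \<Longrightarrow> is_ideal (ideal_colon K x)"
  unfolding ideal_colon_def is_ideal_def by (auto simp: distrib_right mult.assoc)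

lemma ideal_gen_ideal: "is_ideal (ideal_gen S)"
  unfolding ideal_gen_def is_ideal_def by blast

lemma ideal_gen_upper: "S \<subseteq> ideal_gen S"
  unfolding ideal_gen_def by blast

lemma ideal_gen_least: "is_ideal I \<Longrightarrow> S \<subseteq> I \<Longrightarrow> ideal_gen S \<subseteq> I"
  unfolding ideal_gen_def by blast

lemma ideal_gen_mono: "S \<subseteq> T \<Longrightarrow> ideal_gen S \<subseteq> ideal_gen T"
  unfolding ideal_gen_def by blast

lemma ideal_of_list_ideal: "is_ideal (ideal_of_list fs)"
  unfolding ideal_of_list_def by (rule ideal_gen_ideal)

lemma ideal_sum_memI: "a \<in> A \<Longrightarrow> b \<in> B \<Longrightarrow> a + b \<in> ideal_sum A B"
  unfolding ideal_sum_def by blast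

lemma ideal_sum_memE:
  "x \<in> ideal_sum A B \<Longrightarrow> (\<And>a b. a \<in> A \<Longrightarrow> b \<in> B \<Longrightarrow> x = a + b \<Longrightarrow> P) \<Longrightarrow> P"
  unfolding ideal_sum_def by blast

lemma ideal_sum_ideal:
  assumes A: "is_ideal A" and B: "is_ideal B"
  shows "is_ideal (ideal_sum A B)"
proof (rule is_idealI)
  show "0 \<in> ideal_sum A B"
    using ideal_sum_memI[OF ideal_zero[OF A] ideal_zero[OF B]] by simp
next
  fix x y assume "x \<in> ideal_sum A B" "y \<in> ideal_sum A B"
  then obtain a1 b1 a2 b2 where "a1 \<in> A" "b1 \<in> B" "a2 \<in> A" "b2 \<in> B" "x = a1 + b1" "y = a2 + b2"
    by (metis ideal_sum_memE)
  then show "x + y \<in> ideal_sum A B"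
    using ideal_sum_memI[OF ideal_add[OF A] ideal_add[OF B]] by (simp add: algebra_simps)
next
  fix r x assume "x \<in> ideal_sum A B"
  then obtain a b where "a \<in> A" "b \<in> B" "x = a + b" by (rule ideal_sum_memE)
  then show "r * x \<in> ideal_sum A B"
    using ideal_sum_memI[OF ideal_mult_left[OF A] ideal_mult_left[OF B]] by (simp add: distrib_left)
qed

lemma ideal_sum_commute: "ideal_sum A B = ideal_sum B A"
  unfolding ideal_sum_def by (auto simp: add.commute) (metis add.commute)+

lemma ideal_sum_assoc: "ideal_sum (ideal_sum A B) C = ideal_sum A (ideal_sum B C)"
proof
  show "ideal_sum (ideal_sum A B) C \<subseteq> ideal_sum A (ideal_sum B C)"
  proof
    fix x assume "x \<in> ideal_sum (ideal_sum A B) C"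
    then obtain y c where "y \<in> ideal_sum A B" "c \<in> C" "x = y + c" by (rule ideal_sum_memE)
    moreover from this obtain a b where "a \<in> A" "b \<in> B" "y = a + b" by (auto elim: ideal_sum_memE)
    ultimately show "x \<in> ideal_sum A (ideal_sum B C)"
      using ideal_sum_memI[of a A "b + c" "ideal_sum B C"] ideal_sum_memI[of b B c C] by (simp add: add.assoc)
  qed
  show "ideal_sum A (ideal_sum B C) \<subseteq> ideal_sum (ideal_sum A B) C"
  proof
    fix x assume "x \<in> ideal_sum A (ideal_sum B C)"
    then obtain a y where "a \<in> A" "y \<in> ideal_sum B C" "x = a + y" by (rule ideal_sum_memE)
    moreover from this obtain b c where "b \<in> B" "c \<in> C" "y = b + c" by (auto elim: ideal_sum_memE)
    ultimately show "x \<in> ideal_sum (ideal_sum A B) C"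
      using ideal_sum_memI[of "a + b" "ideal_sum A B" c C] ideal_sum_memI[of a A b B] by (simp add: add.assoc)
  qed
qed

lemma ideal_sum_upper1: "is_ideal B \<Longrightarrow> A \<subseteq> ideal_sum A B"
  using ideal_sum_memI[of _ A 0 B] ideal_zero by (metis add_0_right subsetI)

lemma ideal_sum_upper2: "is_ideal A \<Longrightarrow> B \<subseteq> ideal_sum A B"
  using ideal_sum_memI[of 0 A _ B] ideal_zero by (metis add_0_left subsetI)

lemma ideal_sum_least: "is_ideal C \<Longrightarrow> A \<subseteq> C \<Longrightarrow> B \<subseteq> C \<Longrightarrow> ideal_sum A B \<subseteq> C"
  unfolding ideal_sum_def using ideal_add by blast

lemma ideal_sum_mono: "A \<subseteq> A' \<Longrightarrow> B \<subseteq> B' \<Longrightarrow> ideal_sum A B \<subseteq> ideal_sum A' B'"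
  unfolding ideal_sum_def by blast

lemma ideal_sum_absorb: "is_ideal A \<Longrightarrow> is_ideal B \<Longrightarrow> B \<subseteq> A \<Longrightarrow> ideal_sum A B = A"
  using ideal_sum_least[of A A B] ideal_sum_upper1[of B A] by blast

lemma ideal_prod_ideal: "is_ideal (ideal_prod A B)"
  unfolding ideal_prod_def by (rule ideal_gen_ideal)

lemma ideal_prod_memI: "a \<in> A \<Longrightarrow> b \<in> B \<Longrightarrow> a * b \<in> ideal_prod A B"
  unfolding ideal_prod_def by (rule subsetD[OF ideal_gen_upper]) blast

lemma ideal_prod_least:
  "is_ideal L \<Longrightarrow> (\<And>a b. a \<in> A \<Longrightarrow> b \<in> B \<Longrightarrow> a * b \<in> L) \<Longrightarrow> ideal_prod A B \<subseteq> L"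
  unfolding ideal_prod_def by (rule ideal_gen_least) blast+

lemma ideal_pow_ideal: "is_ideal (ideal_pow J n)"
  by (cases n) (auto simp: ideal_UNIV ideal_prod_ideal)

lemma zero_in_ideal_pow [simp]: "0 \<in> ideal_pow J n"
  by (rule ideal_zero[OF ideal_pow_ideal])

lemma ideal_pow_1: "is_ideal J \<Longrightarrow> ideal_pow J 1 = J"
proof
  assume J: "is_ideal J"
  show "ideal_pow J 1 \<subseteq> J"
    by (simp, rule ideal_prod_least[OF J]) (simp add: J ideal_mult_right)
  show "J \<subseteq> ideal_pow J 1"
    using ideal_prod_memI[of _ J 1 UNIV] by force
qed

lemma ideal_pow_mult:
  "is_ideal J \<Longrightarrow> u \<in> ideal_pow J a \<Longrightarrow> v \<in> ideal_pow J b \<Longrightarrow> u * v \<in> ideal_pow J (a + b)"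
proof (induction a arbitrary: u v)
  case 0
  then show ?case by (simp add: ideal_mult_left ideal_pow_ideal)
next
  case (Suc a)
  let ?L = "ideal_colon (ideal_pow J (Suc a + b)) v"
  have "ideal_pow J (Suc a) \<subseteq> ?L"
    unfolding ideal_pow.simps
  proof (rule ideal_prod_least[OF ideal_colon_ideal[OF ideal_pow_ideal]])
    fix x y assume "x \<in> J" "y \<in> ideal_pow J a"
    then have "y * v \<in> ideal_pow J (a + b)" using Suc by blast
    then have "x * (y * v) \<in> ideal_pow J (Suc a + b)" using \<open>x \<in> J\<close> ideal_prod_memI by auto
    then show "x * y \<in> ?L" unfolding ideal_colon_def by (simp add: mult.assoc)
  qed
  then show ?case using Suc.prems unfolding ideal_colon_def by blast
qed

lemma ideal_pow_add_least:
  assumes "is_ideal L" "\<And>u v. u \<in> ideal_pow J a \<Longrightarrow> v \<in> ideal_pow J b \<Longrightarrow> u * v \<in> L"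
  shows "ideal_pow J (a + b) \<subseteq> L"
  using assms
proof (induction a arbitrary: L)
  case 0
  then show ?case using 0(2)[of 1] by auto
next
  case (Suc a)
  show ?case unfolding add_Suc ideal_pow.simps
  proof (rule ideal_prod_least[OF Suc.prems(1)])
    fix x w assume x: "x \<in> J" and w: "w \<in> ideal_pow J (a + b)"
    have "ideal_pow J (a + b) \<subseteq> ideal_colon L x"
    proof (rule Suc.IH[OF ideal_colon_ideal[OF Suc.prems(1)]])
      fix u v assume "u \<in> ideal_pow J a" "v \<in> ideal_pow J b"
      then have "x * u \<in> ideal_pow J (Suc a)" using x ideal_prod_memI by auto
      then have "(x * u) * v \<in> L" using Suc.prems(2) \<open>v \<in> _\<close> by blast
      then show "u * v \<in> ideal_colon L x" unfolding ideal_colon_def by (simp add: ac_simps)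
    qed
    then show "x * w \<in> L" using w unfolding ideal_colon_def by (auto simp: mult.commute)
  qed
qed

lemma ideal_pow_Suc_subset: "is_ideal J \<Longrightarrow> ideal_pow J (Suc n) \<subseteq> ideal_pow J n"
  by (simp, rule ideal_prod_least[OF ideal_pow_ideal]) (simp add: ideal_mult_left ideal_pow_ideal)

lemma ideal_pow_antimono: "is_ideal J \<Longrightarrow> m \<le> n \<Longrightarrow> ideal_pow J n \<subseteq> ideal_pow J m"
proof (induction n)
  case (Suc n)
  then show ?case using ideal_pow_Suc_subset[of J n] by (cases "m = Suc n") auto
qed simp

definition principal :: "'a::comm_ring_1 \<Rightarrow> 'a set" where
  "principal g = range (\<lambda>r. r * g)"

lemma principal_memI: "r * g \<in> principal g"
  unfolding principal_def by blast

lemma principal_ideal: "is_ideal (principal g)"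
  unfolding principal_def
proof (rule is_idealI)
  show "0 \<in> range (\<lambda>r. r * g)" by (metis mult_zero_left rangeI)
  fix x y assume "x \<in> range (\<lambda>r. r * g)" "y \<in> range (\<lambda>r. r * g)"
  then obtain a b where "x = a * g" "y = b * g" by blast
  then show "x + y \<in> range (\<lambda>r. r * g)" using distrib_right[of a b g] by (metis rangeI)
next
  fix r x assume "x \<in> range (\<lambda>r. r * g)"
  then obtain a where "x = a * g" by blast
  then show "r * x \<in> range (\<lambda>r. r * g)" using mult.assoc[of r a g] by (metis rangeI)
qed

lemma ideal_gen_empty: "ideal_gen {} = {0}"
proof
  have "is_ideal {0::'a}" by (rule is_idealI) auto
  then show "ideal_gen {} \<subseteq> {0::'a}" by (rule ideal_gen_least) simp
  show "{0} \<subseteq> ideal_gen {}" using ideal_zero[OF ideal_gen_ideal] by blast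
qed

lemma ideal_gen_insert: "ideal_gen (insert g S) = ideal_sum (ideal_gen S) (principal g)"
proof
  show "ideal_gen (insert g S) \<subseteq> ideal_sum (ideal_gen S) (principal g)"
  proof (rule ideal_gen_least[OF ideal_sum_ideal[OF ideal_gen_ideal principal_ideal]])
    have "g \<in> principal g" using principal_memI[of 1 g] by simp
    then have "g \<in> ideal_sum (ideal_gen S) (principal g)" using ideal_sum_upper2[OF ideal_gen_ideal] by blast
    moreover have "S \<subseteq> ideal_sum (ideal_gen S) (principal g)"
      using ideal_gen_upper ideal_sum_upper1[OF principal_ideal] by blast
    ultimately show "insert g S \<subseteq> ideal_sum (ideal_gen S) (principal g)" by blast
  qed
  have "principal g \<subseteq> ideal_gen (insert g S)"
    unfolding principal_def using ideal_mult_left[OF ideal_gen_ideal] ideal_gen_upper by blast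
  then show "ideal_sum (ideal_gen S) (principal g) \<subseteq> ideal_gen (insert g S)"
    by (intro ideal_sum_least[OF ideal_gen_ideal] ideal_gen_mono) auto
qed

section \<open>Lengths of quotients\<close>

definition ideal_chain :: "'a::comm_ring_1 set \<Rightarrow> 'a set \<Rightarrow> nat \<Rightarrow> bool" where
  "ideal_chain K L n \<longleftrightarrow> (\<exists>C :: nat \<Rightarrow> 'a set. C 0 = K \<and> C n = L \<and>
     (\<forall>i\<le>n. is_ideal (C i)) \<and> (\<forall>i<n. C i \<subset> C (Suc i)))"

lemma quot_length_eq_Sup_chain: "quot_length K = Sup {enat n | n. ideal_chain K UNIV n}"
  unfolding quot_length_def ideal_chain_def by simp

lemma ideal_chain_refl: "is_ideal K \<Longrightarrow> ideal_chain K K 0"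
  unfolding ideal_chain_def by (rule exI[of _ "\<lambda>_. K"]) simp

lemma ideal_chainD:
  assumes "ideal_chain K L n"
  shows "is_ideal K" "is_ideal L" "K \<subseteq> L" "n > 0 \<Longrightarrow> K \<subset> L"
proof -
  obtain C where C: "C 0 = K" "C n = L" "\<forall>i\<le>n. is_ideal (C i)" "\<forall>i<n. C i \<subset> C (Suc i)"
    using assms unfolding ideal_chain_def by blast
  show "is_ideal K" "is_ideal L" using C by auto
  have mono: "C 0 \<subseteq> C j \<and> (j > 0 \<longrightarrow> C 0 \<subset> C j)" if "j \<le> n" for j
    using that
  proof (induction j)
    case (Suc j)
    then show ?case using C(4)[rule_format, of j] by auto
  qed simp
  show "K \<subseteq> L" "n > 0 \<Longrightarrow> K \<subset> L" using mono[of n] C by auto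
qed

lemma ideal_chain_snoc:
  assumes "ideal_chain K L n" "L \<subset> L'" "is_ideal L'"
  shows "ideal_chain K L' (Suc n)"
proof -
  obtain C where C: "C 0 = K" "C n = L" "\<forall>i\<le>n. is_ideal (C i)" "\<forall>i<n. C i \<subset> C (Suc i)"
    using assms unfolding ideal_chain_def by blast
  let ?D = "C(Suc n := L')"
  have "?D 0 = K" "?D (Suc n) = L'" using C by auto
  moreover have "\<forall>i\<le>Suc n. is_ideal (?D i)" using C assms by (auto simp: le_Suc_eq)
  moreover have "\<forall>i<Suc n. ?D i \<subset> ?D (Suc i)" using C assms by (auto simp: less_Suc_eq)
  ultimately show ?thesis unfolding ideal_chain_def by blast
qed

lemma ideal_chain_Cons:
  assumes "ideal_chain K' L n" "K \<subset> K'" "is_ideal K"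
  shows "ideal_chain K L (Suc n)"
proof -
  obtain C where C: "C 0 = K'" "C n = L" "\<forall>i\<le>n. is_ideal (C i)" "\<forall>i<n. C i \<subset> C (Suc i)"
    using assms unfolding ideal_chain_def by blast
  define D where "D i = (if i = 0 then K else C (i - 1))" for i
  have "D 0 = K" "D (Suc n) = L" using C by (auto simp: D_def)
  moreover have "\<forall>i\<le>Suc n. is_ideal (D i)" using C assms by (auto simp: D_def)
  moreover have "\<forall>i<Suc n. D i \<subset> D (Suc i)"
  proof (intro allI impI)
    fix i assume "i < Suc n"
    then show "D i \<subset> D (Suc i)" using C assms by (cases i) (auto simp: D_def)
  qed
  ultimately show ?thesis unfolding ideal_chain_def by blast
qed

lemma ideal_chain_append:
  assumes "ideal_chain K L a" "ideal_chain L M b"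
  shows "ideal_chain K M (a + b)"
  using assms(2)
proof (induction b arbitrary: M)
  case 0
  then show ?case using assms(1) unfolding ideal_chain_def by auto
next
  case (Suc b)
  obtain C where C: "C 0 = L" "C (Suc b) = M" "\<forall>i\<le>Suc b. is_ideal (C i)" "\<forall>i<Suc b. C i \<subset> C (Suc i)"
    using Suc.prems unfolding ideal_chain_def by blast
  then have "ideal_chain L (C b) b" unfolding ideal_chain_def by (intro exI[of _ C]) auto
  then have "ideal_chain K (C b) (a + b)" by (rule Suc.IH)
  then show ?case using C ideal_chain_snoc[of K "C b" "a + b" M] by auto
qed

lemma ideal_chain_of_increasing:
  assumes "\<And>i. i \<le> n \<Longrightarrow> is_ideal (D i)" "\<And>i. i < n \<Longrightarrow> D i \<subseteq> D (Suc i)"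
  shows "ideal_chain (D 0) (D n) (card {i. i < n \<and> D i \<noteq> D (Suc i)})"
  using assms
proof (induction n)
  case 0
  then show ?case using ideal_chain_refl by simp
next
  case (Suc n)
  have IH: "ideal_chain (D 0) (D n) (card {i. i < n \<and> D i \<noteq> D (Suc i)})"
    using Suc by auto
  show ?case
  proof (cases "D n = D (Suc n)")
    case True
    then have "{i. i < Suc n \<and> D i \<noteq> D (Suc i)} = {i. i < n \<and> D i \<noteq> D (Suc i)}"
      by (auto simp: less_Suc_eq)
    then show ?thesis using IH True by simp
  next
    case False
    then have "{i. i < Suc n \<and> D i \<noteq> D (Suc i)} = insert n {i. i < n \<and> D i \<noteq> D (Suc i)}"
      by (auto simp: less_Suc_eq)
    moreover have "D n \<subset> D (Suc n)" using False Suc.prems by auto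
    ultimately show ?thesis using ideal_chain_snoc[OF IH] Suc.prems by simp
  qed
qed

lemma ideal_modular_eq:
  assumes V: "is_ideal V" and W: "is_ideal W" and "V \<subseteq> W" "W \<inter> L \<subseteq> V" "W \<subseteq> ideal_sum V L"
  shows "V = W"
proof (rule antisym)
  show "W \<subseteq> V"
  proof
    fix x assume x: "x \<in> W"
    then obtain v l where vl: "v \<in> V" "l \<in> L" "x = v + l" using assms(5) by (blast elim: ideal_sum_memE)
    then have "l \<in> W" using ideal_diff[OF W x, of v] assms(3) by auto
    then show "x \<in> V" using vl assms(4) ideal_add[OF V] by blast
  qed
qed fact

text \<open>By the modular law a step C i \<subset> C (i+1) cannot become an equality both after intersecting
  with L and after adding L, so the two image chains together have at least n proper steps.\<close>

lemma ideal_chain_split: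
  assumes "ideal_chain K M n" "K \<subseteq> L" "L \<subseteq> M" "is_ideal L"
  shows "\<exists>u v. n \<le> u + v \<and> ideal_chain K L u \<and> ideal_chain L M v"
proof -
  obtain C where C: "C 0 = K" "C n = M" "\<forall>i\<le>n. is_ideal (C i)" "\<forall>i<n. C i \<subset> C (Suc i)"
    using assms unfolding ideal_chain_def by blast
  define D where "D i = C i \<inter> L" for i
  define E where "E i = ideal_sum (C i) L" for i
  let ?dD = "{i. i < n \<and> D i \<noteq> D (Suc i)}" and ?dE = "{i. i < n \<and> E i \<noteq> E (Suc i)}"
  have cD: "ideal_chain (D 0) (D n) (card ?dD)"
    using C assms(4) by (intro ideal_chain_of_increasing) (auto simp: D_def ideal_Int)
  have cE: "ideal_chain (E 0) (E n) (card ?dE)"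
  proof (rule ideal_chain_of_increasing)
    fix i assume "i < n"
    then have "C i \<subseteq> C (Suc i)" using C by auto
    then show "E i \<subseteq> E (Suc i)" unfolding E_def by (rule ideal_sum_mono) simp
  qed (use C assms(4) in \<open>simp add: E_def ideal_sum_ideal\<close>)
  have "D 0 = K" "D n = L" using C assms unfolding D_def by blast+
  moreover have "E 0 = L" "E n = M"
    using C assms ideal_chainD(1,2)[OF assms(1)] ideal_sum_absorb[of L K] ideal_sum_absorb[of M L]
    by (simp_all add: E_def ideal_sum_commute)
  moreover have "n \<le> card ?dD + card ?dE"
  proof -
    have "{..<n} \<subseteq> ?dD \<union> ?dE"
    proof
      fix i assume i: "i \<in> {..<n}"
      show "i \<in> ?dD \<union> ?dE"
      proof (rule ccontr)
        assume "i \<notin> ?dD \<union> ?dE"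
        then have "C (Suc i) \<inter> L \<subseteq> C i" "C (Suc i) \<subseteq> ideal_sum (C i) L"
          using i ideal_sum_upper1[OF assms(4), of "C (Suc i)"] by (auto simp: D_def E_def)
        then have "C i = C (Suc i)" using C i by (intro ideal_modular_eq) auto
        then show False using C i by auto
      qed
    qed
    then have "card {..<n} \<le> card (?dD \<union> ?dE)" by (intro card_mono) auto
    also have "\<dots> \<le> card ?dD + card ?dE" by (rule card_Un_le)
    finally show ?thesis by simp
  qed
  ultimately show ?thesis using cD cE by (intro exI[of _ "card ?dD"] exI[of _ "card ?dE"]) simp
qed

lemma ideal_chain_map:
  assumes "ideal_chain K L n"
    and "\<And>V. is_ideal V \<Longrightarrow> K \<subseteq> V \<Longrightarrow> V \<subseteq> L \<Longrightarrow> is_ideal (f V)"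
    and "\<And>V W. is_ideal V \<Longrightarrow> is_ideal W \<Longrightarrow> K \<subseteq> V \<Longrightarrow> W \<subseteq> L \<Longrightarrow> V \<subset> W \<Longrightarrow> f V \<subset> f W"
  shows "ideal_chain (f K) (f L) n"
proof -
  obtain C where C: "C 0 = K" "C n = L" "\<forall>i\<le>n. is_ideal (C i)" "\<forall>i<n. C i \<subset> C (Suc i)"
    using assms unfolding ideal_chain_def by blast
  have mono: "C i \<subseteq> C j" if "i \<le> j" "j \<le> n" for i j
    using that
  proof (induction j)
    case (Suc j)
    then show ?case using C(4)[rule_format, of j] by (auto simp: le_Suc_eq)
  qed simp
  have rng: "K \<subseteq> C i \<and> C i \<subseteq> L" if "i \<le> n" for i
    using mono[of 0 i] mono[of i n] that C by auto
  show ?thesis unfolding ideal_chain_def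
  proof (intro exI[of _ "\<lambda>i. f (C i)"] conjI allI impI)
    show "f (C 0) = f K" "f (C n) = f L" using C by auto
    fix i
    show "i \<le> n \<Longrightarrow> is_ideal (f (C i))" using assms(2) rng C by auto
    show "i < n \<Longrightarrow> f (C i) \<subset> f (C (Suc i))"
      using assms(3)[of "C i" "C (Suc i)"] rng[of i] rng[of "Suc i"] C by auto
  qed
qed

lemma ideal_chain_inter:
  assumes chain: "ideal_chain K (ideal_sum X K) u" and X: "is_ideal X"
  shows "ideal_chain (K \<inter> X) X u"
proof -
  have "ideal_chain (K \<inter> X) (ideal_sum X K \<inter> X) u"
  proof (rule ideal_chain_map[OF chain ideal_Int[OF _ X]])
    fix V W assume V: "is_ideal V" and W: "is_ideal W" and KV: "K \<subseteq> V"
      and WX: "W \<subseteq> ideal_sum X K" and VW: "V \<subset> W"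
    have "W \<subseteq> ideal_sum V X"
      using WX ideal_sum_mono[OF KV order_refl, of X] by (simp add: ideal_sum_commute)
    then show "V \<inter> X \<subset> W \<inter> X"
      using ideal_modular_eq[OF V W, of X] VW by blast
  qed
  moreover have "ideal_sum X K \<inter> X = X" using ideal_sum_upper1[OF ideal_chainD(1)[OF chain]] by blast
  ultimately show ?thesis by simp
qed

lemma ideal_chain_sum:
  assumes chain: "ideal_chain U X u" and I: "is_ideal I" and IX: "I \<inter> X \<subseteq> U"
  shows "ideal_chain (ideal_sum U I) (ideal_sum X I) u"
proof (rule ideal_chain_map[OF chain ideal_sum_ideal[OF _ I]])
  fix V W assume V: "is_ideal V" and W: "is_ideal W" and UV: "U \<subseteq> V"
    and WX: "W \<subseteq> X" and VW: "V \<subset> W"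
  have "W \<inter> I \<subseteq> V" using WX IX UV by blast
  then show "ideal_sum V I \<subset> ideal_sum W I"
    using ideal_modular_eq[OF V W, of I] ideal_sum_upper1[OF I, of W] ideal_sum_mono[of V W I I] VW
    by blast
qed

lemma quot_length_ge: "ideal_chain K UNIV n \<Longrightarrow> enat n \<le> quot_length K"
  unfolding quot_length_eq_Sup_chain by (rule Sup_upper) blast

lemma quot_length_attained:
  assumes "is_ideal K" "quot_length K \<noteq> \<infinity>"
  shows "\<exists>n. ideal_chain K UNIV n \<and> quot_length K = enat n"
proof -
  let ?S = "{enat n | n. ideal_chain K UNIV n}"
  have "ideal_chain K UNIV 0 \<or> ideal_chain K UNIV 1"
    using ideal_chain_refl[OF ideal_UNIV] ideal_chain_Cons[OF ideal_chain_refl[OF ideal_UNIV] _ assms(1)]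
    by (cases "K = UNIV") auto
  then have ne: "?S \<noteq> {}" by blast
  have Sup: "Sup ?S = (if ?S = {} then 0 else if finite ?S then Max ?S else \<infinity>)"
    by (rule Sup_enat_def)
  have "finite ?S"
  proof (rule ccontr)
    assume "infinite ?S"
    then have "Sup ?S = \<infinity>" using ne Sup by (simp only: if_False if_True)
    then show False using assms(2) unfolding quot_length_eq_Sup_chain by simp
  qed
  then have "Sup ?S = Max ?S" using ne Sup by (simp only: if_False if_True)
  moreover have "Max ?S \<in> ?S" by (rule Max_in[OF \<open>finite ?S\<close> ne])
  ultimately show ?thesis unfolding quot_length_eq_Sup_chain by auto
qed

definition chain_bounded :: "'a::comm_ring_1 set \<Rightarrow> 'a set \<Rightarrow> nat \<Rightarrow> bool" where
  "chain_bounded K L B \<longleftrightarrow> (\<forall>n. ideal_chain K L n \<longrightarrow> n \<le> B)"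

lemma chain_bounded_refl: "chain_bounded L L 0"
  unfolding chain_bounded_def using ideal_chainD(4) by blast

lemma chain_bounded_trans:
  assumes "K \<subseteq> L" "L \<subseteq> M" "is_ideal L" "chain_bounded K L a" "chain_bounded L M b"
  shows "chain_bounded K M (a + b)"
  unfolding chain_bounded_def
proof (intro allI impI)
  fix n assume "ideal_chain K M n"
  then obtain u v where "n \<le> u + v" "ideal_chain K L u" "ideal_chain L M v"
    using ideal_chain_split assms(1-3) by blast
  then show "n \<le> a + b" using assms(4,5) unfolding chain_bounded_def by fastforce
qed

lemma chain_bounded_UNIV_antimono:
  assumes "chain_bounded K UNIV B" "K \<subseteq> K'" "is_ideal K"
  shows "chain_bounded K' UNIV B"
  unfolding chain_bounded_def
proof (intro allI impI)
  fix n assume n: "ideal_chain K' UNIV n"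
  have "ideal_chain K UNIV n \<or> ideal_chain K UNIV (Suc n)"
    using ideal_chain_Cons[OF n _ assms(3)] n assms(2) by (cases "K = K'") auto
  then show "n \<le> B" using assms(1) unfolding chain_bounded_def by fastforce
qed

lemma quot_length_finite_if_chain_bounded:
  assumes "chain_bounded K UNIV B"
  shows "quot_length K \<noteq> \<infinity>"
proof -
  have "quot_length K \<le> enat B" unfolding quot_length_eq_Sup_chain
    by (rule Sup_least) (use assms in \<open>auto simp: chain_bounded_def\<close>)
  then show ?thesis by (cases "quot_length K") auto
qed

lemma chain_bounded_maximal:
  assumes "maximal_ideal m"
  shows "chain_bounded m UNIV 1"
  unfolding chain_bounded_def
proof (intro allI impI)
  fix n assume "ideal_chain m UNIV n"
  then obtain C where C: "C 0 = m" "C n = UNIV" "\<forall>i\<le>n. is_ideal (C i)" "\<forall>i<n. C i \<subset> C (Suc i)"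
    unfolding ideal_chain_def by blast
  show "n \<le> 1"
  proof (rule ccontr)
    assume "\<not> n \<le> 1"
    then have "C 0 \<subset> C 1" "C 1 \<subset> C 2" "is_ideal (C 1)"
      using C(3,4) by (auto simp: numeral_2_eq_2)
    then show False using assms C(1) unfolding maximal_ideal_def by blast
  qed
qed

text \<open>The quotient L + (g) / L is the image of R/(L : g), and (L : g) contains Q.\<close>

lemma chain_bounded_principal:
  assumes L: "is_ideal L" and Q: "is_ideal Q" and QL: "\<And>q. q \<in> Q \<Longrightarrow> q * g \<in> L"
    and B: "chain_bounded Q UNIV B"
  shows "chain_bounded L (ideal_sum L (principal g)) B"
  unfolding chain_bounded_def
proof (intro allI impI)
  let ?M = "ideal_sum L (principal g)"
  fix n assume ch: "ideal_chain L ?M n"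
  have "ideal_chain (ideal_colon L g) (ideal_colon ?M g) n"
  proof (rule ideal_chain_map[OF ch ideal_colon_ideal])
    fix V W :: "'a set" assume V: "is_ideal V" and W: "is_ideal W" and LV: "L \<subseteq> V"
      and WM: "W \<subseteq> ?M" and VW: "V \<subset> W"
    then obtain w where w: "w \<in> W" "w \<notin> V" by blast
    then obtain l x where lx: "l \<in> L" "x \<in> principal g" "w = l + x"
      using WM by (blast elim: ideal_sum_memE)
    then obtain r where r: "x = r * g" unfolding principal_def by blast
    have "r * g \<in> W" using ideal_diff[OF W w(1), of l] lx r LV VW by auto
    moreover have "r * g \<notin> V" using ideal_add[OF V, of l "r * g"] lx r LV w by auto
    ultimately show "ideal_colon V g \<subset> ideal_colon W g"
      using VW unfolding ideal_colon_def by blast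
  qed
  moreover have "ideal_colon ?M g = UNIV"
    using principal_memI[of 1 g] ideal_sum_upper2[OF L]
    by (intro ideal_eq_UNIV_if_one ideal_colon_ideal ideal_sum_ideal[OF L principal_ideal])
       (auto simp: ideal_colon_def)
  moreover have "Q \<subseteq> ideal_colon L g" using QL unfolding ideal_colon_def by blast
  ultimately show "n \<le> B"
    using chain_bounded_UNIV_antimono[OF B _ Q] unfolding chain_bounded_def by auto
qed

lemma chain_bounded_finite_gen:
  assumes "finite S" "is_ideal L" "is_ideal Q" "\<And>g q. g \<in> S \<Longrightarrow> q \<in> Q \<Longrightarrow> q * g \<in> L"
    and B: "chain_bounded Q UNIV B"
  shows "chain_bounded L (ideal_sum L (ideal_gen S)) (card S * B)"
  using assms(1,4)
proof (induction S rule: finite_induct)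
  case empty
  have "is_ideal {0::'a}" by (rule is_idealI) auto
  then show ?case
    using ideal_sum_absorb[OF assms(2), of "{0}"] ideal_zero[OF assms(2)] chain_bounded_refl
    by (simp add: ideal_gen_empty)
next
  case (insert g S)
  let ?L' = "ideal_sum L (ideal_gen S)"
  have L': "is_ideal ?L'" by (rule ideal_sum_ideal[OF assms(2) ideal_gen_ideal])
  have LL': "L \<subseteq> ?L'" by (rule ideal_sum_upper1[OF ideal_gen_ideal])
  have "chain_bounded ?L' (ideal_sum ?L' (principal g)) B"
    using insert.prems LL' by (intro chain_bounded_principal[OF L' assms(3) _ B]) blast
  then have "chain_bounded L (ideal_sum ?L' (principal g)) (card S * B + B)"
    using chain_bounded_trans[OF LL' ideal_sum_upper1[OF principal_ideal] L'] insert by auto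
  then show ?case using insert.hyps by (simp add: ideal_gen_insert ideal_sum_assoc add.commute)
qed

lemma chain_bounded_pow:
  assumes N: "noetherian_ring TYPE('a::comm_ring_1)" and Q: "is_ideal (Q::'a set)"
    and B: "chain_bounded Q UNIV B"
  shows "\<exists>B'. chain_bounded (ideal_pow Q k) UNIV B'"
proof (induction k)
  case 0
  then show ?case using chain_bounded_refl by auto
next
  case (Suc k)
  then obtain Bk where Bk: "chain_bounded (ideal_pow Q k) UNIV Bk" by blast
  obtain S where S: "finite S" "ideal_pow Q k = ideal_gen S"
    using N ideal_pow_ideal unfolding noetherian_ring_def by blast
  let ?L = "ideal_pow Q (Suc k)"
  have "chain_bounded ?L (ideal_sum ?L (ideal_gen S)) (card S * B)"
  proof (rule chain_bounded_finite_gen[OF S(1) ideal_pow_ideal Q _ B])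
    fix g q assume "g \<in> S" "q \<in> Q"
    then show "q * g \<in> ?L"
      using S ideal_gen_upper ideal_pow_mult[OF Q, of q 1 g k] ideal_pow_1[OF Q] by auto
  qed
  moreover have "ideal_sum ?L (ideal_gen S) = ideal_pow Q k"
    using ideal_sum_absorb[OF ideal_pow_ideal ideal_pow_ideal ideal_pow_Suc_subset[OF Q]] S(2)
    by (metis ideal_sum_commute)
  ultimately have "chain_bounded ?L (ideal_pow Q k) (card S * B)" by simp
  then show ?case
    using chain_bounded_trans[OF ideal_pow_Suc_subset[OF Q] _ ideal_pow_ideal _ Bk] by blast
qed

lemma ideal_gen_pow_Suc_subset:
  assumes L: "is_ideal L" and S: "\<And>x. x \<in> S \<Longrightarrow> ideal_pow (ideal_gen S) D \<subseteq> ideal_colon L x"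
  shows "ideal_pow (ideal_gen S) (Suc D) \<subseteq> L"
proof -
  define X where "X = {a. \<forall>b\<in>ideal_pow (ideal_gen S) D. a * b \<in> L}"
  have X: "is_ideal X" unfolding X_def
    by (rule is_idealI)
       (auto simp: distrib_right mult.assoc intro: ideal_add[OF L] ideal_mult_left[OF L] ideal_zero[OF L])
  have "S \<subseteq> X" using S unfolding X_def ideal_colon_def by (auto simp: mult.commute)
  then have "ideal_gen S \<subseteq> X" by (rule ideal_gen_least[OF X])
  then show ?thesis unfolding ideal_pow.simps by (intro ideal_prod_least[OF L]) (auto simp: X_def)
qed

text \<open>The exponent \<Sum>d suffices because a product of \<Sum>d generators contains some generator x
  at least d(x) times.\<close>

lemma ideal_gen_pow_subset:
  assumes S: "finite S" "S \<noteq> {}" and L: "is_ideal L" and d: "\<And>x. x \<in> S \<Longrightarrow> d x \<ge> 1 \<and> x ^ d x \<in> L"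
  shows "ideal_pow (ideal_gen S) (sum d S) \<subseteq> L"
  using L d
proof (induction "sum d S" arbitrary: d L)
  case 0
  then show ?case using S by auto
next
  case (Suc D)
  note L = Suc.prems(1) and dL = Suc.prems(2)
  have "ideal_pow (ideal_gen S) D \<subseteq> ideal_colon L x" if x: "x \<in> S" for x
  proof (cases "d x = 1")
    case True
    then have "x \<in> L" using dL[OF x] by simp
    then show ?thesis using ideal_mult_left[OF L] unfolding ideal_colon_def by blast
  next
    case False
    then have dx: "d x \<ge> 2" using dL x by force
    define d' where "d' = d(x := d x - 1)"
    have "D = sum d' S"
      using Suc.hyps(2) dx x S(1) sum.remove[of S x d] sum.remove[of S x d']
      by (simp add: d'_def sum.cong[of "S - {x}" "S - {x}" d' d])
    moreover have "d' y \<ge> 1 \<and> y ^ d' y \<in> ideal_colon L x" if y: "y \<in> S" for y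
    proof (cases "y = x")
      case True
      have "x ^ (d x - 1) * x = x ^ d x" using dx by (simp add: power_eq_if)
      then show ?thesis using True dx dL x unfolding d'_def ideal_colon_def by auto
    next
      case False
      then show ?thesis using dL y ideal_mult_right[OF L] unfolding d'_def ideal_colon_def by auto
    qed
    ultimately show ?thesis using Suc.hyps(1)[of d' "ideal_colon L x"] ideal_colon_ideal[OF L] by simp
  qed
  then show ?case unfolding Suc.hyps(2)[symmetric] by (rule ideal_gen_pow_Suc_subset[OF L])
qed

lemma m_primary_contains_pow:
  assumes N: "noetherian_ring TYPE('a::comm_ring_1)" and m: "is_ideal (m::'a set)"
    and J: "is_ideal J" "m_primary m J"
  shows "\<exists>t. ideal_pow m t \<subseteq> J"
proof -
  obtain S0 where S0: "finite S0" "m = ideal_gen S0" using N m unfolding noetherian_ring_def by blast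
  let ?S = "insert 0 S0"
  have gen: "ideal_gen ?S = m"
    using S0 ideal_gen_upper[of S0] ideal_zero[OF m] ideal_gen_mono[of S0 ?S]
    by (intro antisym ideal_gen_least[OF m]) auto
  have rad: "ideal_radical J = m" "J \<noteq> UNIV" using J(2) unfolding m_primary_def primary_ideal_def by blast+
  have "\<exists>n. x ^ n \<in> J" if "x \<in> ?S" for x
    using that gen ideal_gen_upper rad unfolding ideal_radical_def by blast
  then obtain d where dJ: "\<And>x. x \<in> ?S \<Longrightarrow> x ^ d x \<in> J" by metis
  have "d x \<ge> 1" if "x \<in> ?S" for x
    using dJ[OF that] ideal_eq_UNIV_if_one[OF J(1)] rad(2) by (cases "d x") auto
  then have "ideal_pow (ideal_gen ?S) (sum d ?S) \<subseteq> J"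
    using dJ S0(1) by (intro ideal_gen_pow_subset J(1)) auto
  then show ?thesis using gen by auto
qed

lemma quot_length_finite:
  assumes N: "noetherian_ring TYPE('a::comm_ring_1)" and m: "local_ring_max m"
    and J: "is_ideal J" "m_primary m J" and K: "is_ideal (K::'a set)" "ideal_pow J n \<subseteq> K"
  shows "quot_length K \<noteq> \<infinity>"
proof -
  have mmax: "maximal_ideal m" using m unfolding local_ring_max_def by blast
  then have mid: "is_ideal m" unfolding maximal_ideal_def by blast
  obtain t where t: "ideal_pow m t \<subseteq> J" using m_primary_contains_pow[OF N mid J] by blast
  obtain Bm where "chain_bounded (ideal_pow m t) UNIV Bm"
    using chain_bounded_pow[OF N mid chain_bounded_maximal[OF mmax]] by blast
  then have "chain_bounded J UNIV Bm" using chain_bounded_UNIV_antimono t ideal_pow_ideal by blast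
  then obtain B where "chain_bounded (ideal_pow J n) UNIV B" using chain_bounded_pow[OF N J(1)] by blast
  then show ?thesis
    using chain_bounded_UNIV_antimono[OF _ K(2) ideal_pow_ideal] quot_length_finite_if_chain_bounded by blast
qed

section \<open>Noetherian subrings\<close>

text \<open>The Rees algebra of J is a subring of the polynomial ring, not a type, so Noetherianity is
  developed for subrings S of a commutative ring; ideals of S are given by their carriers and
  finite generation by lists of generators.\<close>

definition subring :: "'b::comm_ring_1 set \<Rightarrow> bool" where
  "subring S \<longleftrightarrow> 0 \<in> S \<and> 1 \<in> S \<and> (\<forall>x\<in>S. \<forall>y\<in>S. x + y \<in> S \<and> x * y \<in> S) \<and> (\<forall>x\<in>S. - x \<in> S)"

definition subring_ideal :: "'b::comm_ring_1 set \<Rightarrow> 'b set \<Rightarrow> bool" where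
  "subring_ideal S K \<longleftrightarrow>
     K \<subseteq> S \<and> 0 \<in> K \<and> (\<forall>x\<in>K. \<forall>y\<in>K. x + y \<in> K) \<and> (\<forall>r\<in>S. \<forall>x\<in>K. r * x \<in> K)"

definition subring_span :: "'b::comm_ring_1 set \<Rightarrow> 'b list \<Rightarrow> 'b set" where
  "subring_span S xs = {\<Sum>i<length xs. c i * xs ! i | c. \<forall>i<length xs. c i \<in> S}"

definition subring_noetherian :: "'b::comm_ring_1 set \<Rightarrow> bool" where
  "subring_noetherian S \<longleftrightarrow>
     (\<forall>K. subring_ideal S K \<longrightarrow> (\<exists>xs. set xs \<subseteq> K \<and> K = subring_span S xs))"

lemma subringD:
  assumes "subring S"
  shows "0 \<in> S" "1 \<in> S" "x \<in> S \<Longrightarrow> y \<in> S \<Longrightarrow> x + y \<in> S" "x \<in> S \<Longrightarrow> y \<in> S \<Longrightarrow> x * y \<in> S"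
    "x \<in> S \<Longrightarrow> - x \<in> S"
  using assms unfolding subring_def by blast+

lemma subring_sum_closed: "subring S \<Longrightarrow> (\<And>i. i \<in> A \<Longrightarrow> f i \<in> S) \<Longrightarrow> sum f A \<in> S"
  by (induction A rule: infinite_finite_induct) (simp_all add: subringD(1,3))

lemma subring_power_closed: "subring S \<Longrightarrow> b \<in> S \<Longrightarrow> b ^ n \<in> S"
  by (induction n) (simp_all add: subringD(2,4))

lemma subring_idealD:
  assumes "subring_ideal S K"
  shows "K \<subseteq> S" "0 \<in> K" "x \<in> K \<Longrightarrow> y \<in> K \<Longrightarrow> x + y \<in> K" "r \<in> S \<Longrightarrow> x \<in> K \<Longrightarrow> r * x \<in> K"
  using assms unfolding subring_ideal_def by blast+

lemma subring_ideal_sum_closed: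
  "subring_ideal S K \<Longrightarrow> (\<And>i. i \<in> A \<Longrightarrow> f i \<in> K) \<Longrightarrow> sum f A \<in> K"
proof (induction A rule: infinite_finite_induct)
  case (insert x F)
  then show ?case using subring_idealD(3)[of S K "f x" "sum f F"] by simp
qed (simp_all add: subring_idealD(2))

lemma subring_ideal_diff:
  assumes "subring S" "subring_ideal S K" "x \<in> K" "y \<in> K"
  shows "x - y \<in> K"
proof -
  have "- 1 \<in> S" using subringD(2,5)[OF assms(1)] by blast
  then have "x + (- 1) * y \<in> K" using subring_idealD(3,4)[OF assms(2)] assms(3,4) by blast
  then show ?thesis by simp
qed

lemma subring_span_ideal:
  assumes S: "subring S" and xs: "set xs \<subseteq> S"
  shows "subring_ideal S (subring_span S xs)"
  unfolding subring_ideal_def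
proof (intro conjI ballI)
  show "subring_span S xs \<subseteq> S"
    unfolding subring_span_def using xs
    by (auto intro!: subring_sum_closed[OF S] subringD(4)[OF S])
  show "0 \<in> subring_span S xs" unfolding subring_span_def using subringD(1)[OF S]
    by (auto intro!: exI[of _ "\<lambda>_. 0"])
  fix x y assume "x \<in> subring_span S xs" "y \<in> subring_span S xs"
  then obtain c d where "x = (\<Sum>i<length xs. c i * xs ! i)" "\<forall>i<length xs. c i \<in> S"
      "y = (\<Sum>i<length xs. d i * xs ! i)" "\<forall>i<length xs. d i \<in> S"
    unfolding subring_span_def by blast
  then show "x + y \<in> subring_span S xs" unfolding subring_span_def
    by (auto intro!: exI[of _ "\<lambda>i. c i + d i"] subringD(3)[OF S] simp: distrib_right sum.distrib)
next
  fix r x assume r: "r \<in> S" and "x \<in> subring_span S xs"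
  then obtain c where "x = (\<Sum>i<length xs. c i * xs ! i)" "\<forall>i<length xs. c i \<in> S"
    unfolding subring_span_def by blast
  then show "r * x \<in> subring_span S xs" unfolding subring_span_def using r
    by (auto intro!: exI[of _ "\<lambda>i. r * c i"] subringD(4)[OF S] simp: sum_distrib_left mult.assoc)
qed

lemma subring_span_least:
  assumes "subring_ideal S K" "set xs \<subseteq> K"
  shows "subring_span S xs \<subseteq> K"
  using assms unfolding subring_span_def
  by (auto intro!: subring_ideal_sum_closed subring_idealD(4))

lemma subring_span_upper:
  assumes S: "subring S" and "x \<in> set xs"
  shows "x \<in> subring_span S xs"
proof -
  obtain k where k: "k < length xs" "xs ! k = x" using assms(2) by (auto simp: in_set_conv_nth)
  have "(\<Sum>i<length xs. (if i = k then 1 else 0) * xs ! i) = (\<Sum>i<length xs. if i = k then xs ! k else 0)"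
    by (rule sum.cong) auto
  also have "\<dots> = x" using k by simp
  finally show ?thesis unfolding subring_span_def using subringD(1,2)[OF S]
    by (auto intro!: exI[of _ "\<lambda>i. if i = k then 1 else 0"])
qed

lemma subring_span_append:
  assumes S: "subring S"
  shows "subring_span S xs \<subseteq> subring_span S (xs @ ys)"
proof
  fix x assume "x \<in> subring_span S xs"
  then obtain c where x: "x = (\<Sum>i<length xs. c i * xs ! i)" and c: "\<forall>i<length xs. c i \<in> S"
    unfolding subring_span_def by blast
  define d where "d i = (if i < length xs then c i else 0)" for i
  have "(\<Sum>i<length (xs @ ys). d i * (xs @ ys) ! i) = (\<Sum>i<length xs. d i * (xs @ ys) ! i)"
    by (rule sum.mono_neutral_right) (auto simp: d_def)
  also have "\<dots> = x" unfolding x by (rule sum.cong) (auto simp: d_def nth_append)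
  finally show "x \<in> subring_span S (xs @ ys)" unfolding subring_span_def using c subringD(1)[OF S]
    by (auto intro!: exI[of _ d] simp: d_def)
qed

lemma subring_UNIV: "subring UNIV"
  unfolding subring_def by simp

lemma subring_ideal_UNIV_iff: "subring_ideal UNIV K \<longleftrightarrow> is_ideal K"
  unfolding subring_ideal_def is_ideal_def by blast

lemma ideal_gen_set_eq_span: "ideal_gen (set xs) = subring_span UNIV xs"
proof
  have "subring_ideal UNIV (subring_span UNIV xs)"
    by (rule subring_span_ideal[OF subring_UNIV]) simp
  then show "ideal_gen (set xs) \<subseteq> subring_span UNIV xs"
    using subring_span_upper[OF subring_UNIV]
    by (intro ideal_gen_least) (auto simp: subring_ideal_UNIV_iff)
  show "subring_span UNIV xs \<subseteq> ideal_gen (set xs)"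
    using ideal_gen_ideal ideal_gen_upper
    by (intro subring_span_least) (auto simp: subring_ideal_UNIV_iff)
qed

lemma subring_noetherian_UNIV:
  assumes "noetherian_ring TYPE('a::comm_ring_1)"
  shows "subring_noetherian (UNIV :: 'a set)"
  unfolding subring_noetherian_def
proof (intro allI impI)
  fix K :: "'a set" assume "subring_ideal UNIV K"
  then obtain S where S: "finite S" "K = ideal_gen S"
    using assms unfolding noetherian_ring_def subring_ideal_UNIV_iff by blast
  then obtain xs where "set xs = S" using finite_list by blast
  then show "\<exists>xs. set xs \<subseteq> K \<and> K = subring_span UNIV xs"
    using S(2) ideal_gen_upper ideal_gen_set_eq_span by blast
qed

lemma subring_noetherian_stabilizes:
  assumes N: "subring_noetherian S"
    and L: "\<And>n. subring_ideal S (\<Lambda> n)" and mono: "\<And>n m. n \<le> m \<Longrightarrow> \<Lambda> n \<subseteq> \<Lambda> m"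
  shows "\<exists>n. \<Lambda> (Suc n) \<subseteq> \<Lambda> n"
proof -
  let ?U = "\<Union>n. \<Lambda> n"
  have U: "subring_ideal S ?U" unfolding subring_ideal_def
  proof (intro conjI ballI)
    show "?U \<subseteq> S" using subring_idealD(1)[OF L] by blast
    show "0 \<in> ?U" using subring_idealD(2)[OF L[of 0]] by blast
    fix x y assume "x \<in> ?U" "y \<in> ?U"
    then obtain a b where "x \<in> \<Lambda> a" "y \<in> \<Lambda> b" by blast
    then have "x \<in> \<Lambda> (max a b)" "y \<in> \<Lambda> (max a b)" using mono[of a "max a b"] mono[of b "max a b"] by auto
    then show "x + y \<in> ?U" using subring_idealD(3)[OF L] by blast
  next
    fix r x assume "r \<in> S" "x \<in> ?U"
    then show "r * x \<in> ?U" using subring_idealD(4)[OF L] by blast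
  qed
  obtain xs where xs: "set xs \<subseteq> ?U" "?U = subring_span S xs"
    using N[unfolded subring_noetherian_def, rule_format, OF U] by blast
  have "\<forall>x\<in>set xs. \<exists>n. x \<in> \<Lambda> n" using xs(1) by blast
  then have "\<exists>k. \<forall>x\<in>set xs. x \<in> \<Lambda> (k x)" by (rule bchoice)
  then obtain k where k: "\<forall>x\<in>set xs. x \<in> \<Lambda> (k x)" by blast
  define M where "M = Max (k ` set xs)"
  have "set xs \<subseteq> \<Lambda> M"
  proof
    fix x assume x: "x \<in> set xs"
    then have "\<Lambda> (k x) \<subseteq> \<Lambda> M" unfolding M_def by (intro mono) simp
    then show "x \<in> \<Lambda> M" using k x by blast
  qed
  then have "subring_span S xs \<subseteq> \<Lambda> M" by (rule subring_span_least[OF L])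
  then have "?U \<subseteq> \<Lambda> M" using xs(2) by simp
  moreover have "\<Lambda> (Suc M) \<subseteq> ?U" by blast
  ultimately show ?thesis by (intro exI[of _ M]) blast
qed

definition ring_hom_on :: "'b::comm_ring_1 set \<Rightarrow> ('b \<Rightarrow> 'c::comm_ring_1) \<Rightarrow> bool" where
  "ring_hom_on S h \<longleftrightarrow> h 1 = 1 \<and> (\<forall>x\<in>S. \<forall>y\<in>S. h (x + y) = h x + h y \<and> h (x * y) = h x * h y)"

lemma ring_hom_onD:
  assumes "subring S" "ring_hom_on S h"
  shows "h 0 = 0" "h 1 = 1" "x \<in> S \<Longrightarrow> y \<in> S \<Longrightarrow> h (x + y) = h x + h y"
    "x \<in> S \<Longrightarrow> y \<in> S \<Longrightarrow> h (x * y) = h x * h y" "x \<in> S \<Longrightarrow> h (- x) = - h x"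
proof -
  have add: "\<And>x y. x \<in> S \<Longrightarrow> y \<in> S \<Longrightarrow> h (x + y) = h x + h y"
    using assms(2) unfolding ring_hom_on_def by blast
  show "h 0 = 0" using add[of 0 0] subringD(1)[OF assms(1)] by simp
  then show "x \<in> S \<Longrightarrow> h (- x) = - h x"
    using add[of x "- x"] subringD(5)[OF assms(1)] by (simp add: eq_neg_iff_add_eq_0 add.commute)
  show "h 1 = 1" "x \<in> S \<Longrightarrow> y \<in> S \<Longrightarrow> h (x + y) = h x + h y"
    "x \<in> S \<Longrightarrow> y \<in> S \<Longrightarrow> h (x * y) = h x * h y"
    using assms(2) unfolding ring_hom_on_def by blast+
qed

lemma subring_image:
  assumes S: "subring S" and h: "ring_hom_on S h"
  shows "subring (h ` S)"
  unfolding subring_def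
proof (intro conjI ballI)
  show "0 \<in> h ` S" "1 \<in> h ` S"
    using subringD(1,2)[OF S] ring_hom_onD(1,2)[OF S h] by (metis image_eqI)+
  fix x y assume "x \<in> h ` S" "y \<in> h ` S"
  then obtain a b where "a \<in> S" "b \<in> S" "x = h a" "y = h b" by blast
  then show "x + y \<in> h ` S" "x * y \<in> h ` S" "- x \<in> h ` S"
    using subringD(3-5)[OF S] ring_hom_onD(3-5)[OF S h] by (metis image_eqI)+
qed

lemma ring_hom_on_span:
  assumes S: "subring S" and h: "ring_hom_on S h" and xs: "set xs \<subseteq> S"
    and s: "s \<in> subring_span S xs"
  shows "h s \<in> subring_span (h ` S) (map h xs)"
proof -
  obtain c where c: "s = (\<Sum>i<length xs. c i * xs ! i)" "\<forall>i<length xs. c i \<in> S"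
    using s unfolding subring_span_def by blast
  have xsS: "xs ! i \<in> S" if "i < length xs" for i using xs nth_mem[OF that] by blast
  have "h (\<Sum>i\<in>A. c i * xs ! i) = (\<Sum>i\<in>A. h (c i) * h (xs ! i))" if "A \<subseteq> {..<length xs}" for A
    using that
  proof (induction A rule: infinite_finite_induct)
    case (insert i A)
    have "c i * xs ! i \<in> S" "(\<Sum>i\<in>A. c i * xs ! i) \<in> S" "xs ! i \<in> S"
      using insert c(2) xsS by (auto intro!: subring_sum_closed[OF S] subringD(4)[OF S])
    then show ?case using insert c(2) xsS ring_hom_onD(3,4)[OF S h] by auto
  qed (auto simp: ring_hom_onD(1)[OF S h])
  then have "h s = (\<Sum>i<length (map h xs). h (c i) * map h xs ! i)" using c(1) by simp
  then show ?thesis unfolding subring_span_def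
    using c(2) by (intro CollectI exI[of _ "\<lambda>i. h (c i)"]) auto
qed

lemma subring_noetherian_image:
  assumes S: "subring S" and N: "subring_noetherian S" and h: "ring_hom_on S h"
  shows "subring_noetherian (h ` S)"
  unfolding subring_noetherian_def
proof (intro allI impI)
  fix K assume K: "subring_ideal (h ` S) K"
  let ?K' = "{s \<in> S. h s \<in> K}"
  have K': "subring_ideal S ?K'"
    unfolding subring_ideal_def
  proof (intro conjI ballI)
    show "?K' \<subseteq> S" "0 \<in> ?K'" using subringD(1)[OF S] ring_hom_onD(1)[OF S h] subring_idealD(2)[OF K] by auto
    fix x y assume "x \<in> ?K'" "y \<in> ?K'"
    then show "x + y \<in> ?K'" using subringD(3)[OF S] ring_hom_onD(3)[OF S h] subring_idealD(3)[OF K] by auto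
  next
    fix r x assume "r \<in> S" "x \<in> ?K'"
    then show "r * x \<in> ?K'" using subringD(4)[OF S] ring_hom_onD(4)[OF S h] subring_idealD(4)[OF K] by auto
  qed
  obtain xs where xs: "set xs \<subseteq> ?K'" "?K' = subring_span S xs"
    using N[unfolded subring_noetherian_def, rule_format, OF K'] by blast
  have ysK: "set (map h xs) \<subseteq> K" using xs(1) by auto
  have "K \<subseteq> subring_span (h ` S) (map h xs)"
  proof
    fix k assume "k \<in> K"
    then obtain s where "s \<in> ?K'" "k = h s" using subring_idealD(1)[OF K] by blast
    then show "k \<in> subring_span (h ` S) (map h xs)"
      using ring_hom_on_span[OF S h _ , of xs s] xs by blast
  qed
  then show "\<exists>xs. set xs \<subseteq> K \<and> K = subring_span (h ` S) xs"
    using ysK subring_span_least[OF K ysK] by blast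
qed

section \<open>Hilbert's basis theorem\<close>

definition polys :: "'b::comm_ring_1 set \<Rightarrow> 'b poly set" where
  "polys S = {p. \<forall>n. coeff p n \<in> S}"

lemma polys_subring:
  assumes S: "subring S"
  shows "subring (polys S)"
  unfolding subring_def polys_def
proof (intro conjI ballI CollectI allI)
  fix n
  show "coeff 0 n \<in> S" "coeff 1 n \<in> S" using subringD(1,2)[OF S] by simp_all
  fix x y assume x: "x \<in> {p. \<forall>n. coeff p n \<in> S}" and y: "y \<in> {p. \<forall>n. coeff p n \<in> S}"
  show "coeff (x + y) n \<in> S" using x y subringD(3)[OF S] by simp
  show "coeff (- x) n \<in> S" using x subringD(5)[OF S] by simp
  show "coeff (x * y) n \<in> S"
    unfolding coeff_mult using x y by (auto intro!: subring_sum_closed[OF S] subringD(4)[OF S])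
qed

lemma monom_in_polys: "subring S \<Longrightarrow> c \<in> S \<Longrightarrow> monom c k \<in> polys S"
  unfolding polys_def by (auto simp: subringD(1))

text \<open>Subtract from q the S-combination of the shifts x^(deg q - deg p) p, p \<in> ps, that matches its
  leading coefficient.\<close>

lemma lead_coeff_reduction:
  assumes S: "subring S" and K: "subring_ideal (polys S) K"
    and ps: "set ps \<subseteq> K" and deg: "\<And>p. p \<in> set ps \<Longrightarrow> degree p \<le> degree q"
    and q: "q \<in> K" "q \<notin> subring_span (polys S) ps"
    and lc: "lead_coeff q \<in> subring_span S (map lead_coeff ps)"
  shows "\<exists>r\<in>K. r \<notin> subring_span (polys S) ps \<and> degree r < degree q"
proof -
  let ?P = "polys S" and ?V = "subring_span (polys S) ps" and ?n = "length ps"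
  have P: "subring ?P" by (rule polys_subring[OF S])
  have psP: "set ps \<subseteq> ?P" using ps subring_idealD(1)[OF K] by blast
  have V: "subring_ideal ?P ?V" by (rule subring_span_ideal[OF P psP])
  obtain c where c: "lead_coeff q = (\<Sum>i<?n. c i * lead_coeff (ps ! i))" "\<forall>i<?n. c i \<in> S"
    using lc unfolding subring_span_def by auto
  define t where "t i = monom (c i) (degree q - degree (ps ! i)) * ps ! i" for i
  define r where "r = q - (\<Sum>i<?n. t i)"
  have shift: "monom (c i) (degree q - degree (ps ! i)) \<in> ?P" if "i < ?n" for i
    using c(2) that by (intro monom_in_polys[OF S]) auto
  have "t i \<in> K" "t i \<in> ?V" if "i < ?n" for i
    unfolding t_def using that shift ps subring_span_upper[OF P, of "ps ! i" ps]
    by (auto intro!: subring_idealD(4)[OF K] subring_idealD(4)[OF V])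
  then have tK: "(\<Sum>i<?n. t i) \<in> K" and tV: "(\<Sum>i<?n. t i) \<in> ?V"
    by (auto intro!: subring_ideal_sum_closed[OF K] subring_ideal_sum_closed[OF V])
  have rK: "r \<in> K" unfolding r_def by (rule subring_ideal_diff[OF P K q(1) tK])
  have r_notin: "r \<notin> ?V"
    using q(2) subring_idealD(3)[OF V _ tV] unfolding r_def by force
  then have "r \<noteq> 0" using subring_idealD(2)[OF V] by blast
  have deg_t: "degree (t i) \<le> degree q" if "i < ?n" for i
  proof -
    have "degree (t i) \<le> (degree q - degree (ps ! i)) + degree (ps ! i)"
      unfolding t_def using degree_mult_le[of "monom (c i) _"] degree_monom_le[of "c i"]
      by (meson add_le_mono le_refl order_trans)
    then show ?thesis using deg[of "ps ! i"] that by simp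
  qed
  have "degree r \<le> degree q"
    unfolding r_def using deg_t by (intro degree_diff_le degree_sum_le) auto
  moreover have "coeff (t i) (degree q) = c i * lead_coeff (ps ! i)" if "i < ?n" for i
    unfolding t_def coeff_monom_mult using deg[of "ps ! i"] that by simp
  then have "coeff r (degree q) = 0"
    unfolding r_def using c(1) by (simp add: coeff_sum)
  ultimately have "degree r < degree q"
    using \<open>r \<noteq> 0\<close> by (metis leading_coeff_0_iff order.not_eq_order_implies_strict)
  then show ?thesis using rK r_notin by blast
qed

lemma greedy_sequence:
  fixes f :: "'b \<Rightarrow> nat" and V :: "'b list \<Rightarrow> 'b set"
  assumes "\<And>xs. set xs \<subseteq> K \<Longrightarrow> \<exists>p\<in>K. p \<notin> V xs"
  shows "\<exists>q. \<forall>n. q n \<in> K \<and> q n \<notin> V (map q [0..<n]) \<and>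
           (\<forall>p\<in>K. p \<notin> V (map q [0..<n]) \<longrightarrow> f (q n) \<le> f p)"
proof -
  define pick where "pick xs = arg_min f (\<lambda>p. p \<in> K \<and> p \<notin> V xs)" for xs
  have pick: "pick xs \<in> K" "pick xs \<notin> V xs" "\<And>p. p \<in> K \<Longrightarrow> p \<notin> V xs \<Longrightarrow> f (pick xs) \<le> f p"
    if "set xs \<subseteq> K" for xs
    using assms[OF that] arg_min_natI[of "\<lambda>p. p \<in> K \<and> p \<notin> V xs" _ f]
      arg_min_nat_le[of "\<lambda>p. p \<in> K \<and> p \<notin> V xs" _ f]
    unfolding pick_def by blast+
  define gs where "gs = rec_nat [] (\<lambda>n xs. xs @ [pick xs])"
  define q where "q n = pick (gs n)" for n
  have gs: "gs n = map q [0..<n]" for n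
    by (induction n) (simp_all add: gs_def q_def)
  have gsK: "set (gs n) \<subseteq> K" for n
    by (induction n) (simp_all add: gs_def pick(1))
  show ?thesis
  proof (intro exI[of _ q] allI conjI ballI impI)
    fix n p
    show "q n \<in> K" "q n \<notin> V (map q [0..<n])"
      using pick(1,2)[OF gsK[of n]] by (simp_all add: q_def gs)
    show "p \<in> K \<Longrightarrow> p \<notin> V (map q [0..<n]) \<Longrightarrow> f (q n) \<le> f p"
      using pick(3)[OF gsK[of n]] by (simp add: q_def gs)
  qed
qed

text \<open>If an ideal K of S[x] were not finitely generated, choosing successively elements of least
  degree outside the span of those already chosen would make the ideals of S spanned by their
  leading coefficients increase strictly.\<close>

theorem hilbert_basis:
  assumes S: "subring S" and N: "subring_noetherian S"
  shows "subring_noetherian (polys S)"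
  unfolding subring_noetherian_def
proof (intro allI impI, rule ccontr)
  let ?P = "polys S"
  fix K assume K: "subring_ideal ?P K" and nfg: "\<nexists>xs. set xs \<subseteq> K \<and> K = subring_span ?P xs"
  have P: "subring ?P" by (rule polys_subring[OF S])
  have "\<exists>p\<in>K. p \<notin> subring_span ?P xs" if "set xs \<subseteq> K" for xs
    using nfg that subring_span_least[OF K that] by blast
  then obtain q where qK: "\<And>n. q n \<in> K" and q_notin: "\<And>n. q n \<notin> subring_span ?P (map q [0..<n])"
    and q_least: "\<And>n p. p \<in> K \<Longrightarrow> p \<notin> subring_span ?P (map q [0..<n]) \<Longrightarrow> degree (q n) \<le> degree p"
    using greedy_sequence[where f = degree and V = "subring_span ?P"] by metis
  have qs_append: "map q [0..<n] = map q [0..<i] @ map q [i..<n]" if "i \<le> n" for i n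
    using that upt_add_eq_append[of 0 i "n - i"] by simp
  have deg_mono: "degree (q i) \<le> degree (q n)" if "i \<le> n" for i n
  proof (rule q_least[OF qK])
    show "q n \<notin> subring_span ?P (map q [0..<i])"
      using q_notin[of n] subring_span_append[OF P, of "map q [0..<i]" "map q [i..<n]"] qs_append[OF that]
      by auto
  qed
  define \<Lambda> where "\<Lambda> n = subring_span S (map lead_coeff (map q [0..<n]))" for n
  have "lead_coeff (q i) \<in> S" for i
    using qK subring_idealD(1)[OF K] unfolding polys_def by blast
  then have \<Lambda>: "subring_ideal S (\<Lambda> n)" for n
    unfolding \<Lambda>_def by (intro subring_span_ideal[OF S]) auto
  have \<Lambda>_mono: "\<Lambda> i \<subseteq> \<Lambda> n" if "i \<le> n" for i n
    unfolding \<Lambda>_def qs_append[OF that] map_append by (rule subring_span_append[OF S])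
  have "lead_coeff (q n) \<in> \<Lambda> (Suc n)" for n
    unfolding \<Lambda>_def by (rule subring_span_upper[OF S]) simp
  moreover have "lead_coeff (q n) \<notin> \<Lambda> n" for n
  proof
    assume "lead_coeff (q n) \<in> \<Lambda> n"
    moreover have "set (map q [0..<n]) \<subseteq> K" using qK by auto
    moreover have "degree p \<le> degree (q n)" if "p \<in> set (map q [0..<n])" for p
      using that deg_mono by auto
    ultimately obtain r where "r \<in> K" "r \<notin> subring_span ?P (map q [0..<n])" "degree r < degree (q n)"
      using lead_coeff_reduction[OF S K _ _ qK q_notin] unfolding \<Lambda>_def by blast
    then show False using q_least[of r n] by simp
  qed
  moreover obtain n where "\<Lambda> (Suc n) \<subseteq> \<Lambda> n"
    using subring_noetherian_stabilizes[OF N \<Lambda> \<Lambda>_mono] by blast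
  ultimately show False by blast
qed

definition adjoin :: "'b::comm_ring_1 set \<Rightarrow> 'b \<Rightarrow> 'b set" where
  "adjoin S b = (\<lambda>p. poly p b) ` polys S"

lemma ring_hom_on_poly: "ring_hom_on A (\<lambda>p. poly p b)"
  unfolding ring_hom_on_def by simp

lemma subring_adjoin: "subring S \<Longrightarrow> subring (adjoin S b)"
  unfolding adjoin_def by (rule subring_image[OF polys_subring ring_hom_on_poly])

lemma subring_noetherian_adjoin:
  "subring S \<Longrightarrow> subring_noetherian S \<Longrightarrow> subring_noetherian (adjoin S b)"
  unfolding adjoin_def
  by (rule subring_noetherian_image[OF polys_subring hilbert_basis ring_hom_on_poly])

lemma adjoin_base: "subring S \<Longrightarrow> s \<in> S \<Longrightarrow> s \<in> adjoin S b"
  unfolding adjoin_def using monom_in_polys[of S s 0] by (force simp: poly_monom)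

lemma adjoin_gen: "subring S \<Longrightarrow> b \<in> adjoin S b"
  unfolding adjoin_def using monom_in_polys[of S 1 1] subringD(2)
  by (force simp: poly_monom)

lemma adjoin_subset:
  assumes Q: "subring Q" and SQ: "S \<subseteq> Q" and b: "b \<in> Q"
  shows "adjoin S b \<subseteq> Q"
proof
  fix x assume "x \<in> adjoin S b"
  then obtain p where p: "x = poly p b" "p \<in> polys S" unfolding adjoin_def by blast
  have "x = (\<Sum>i\<le>degree p. coeff p i * b ^ i)" using p(1) by (simp add: poly_altdef)
  also have "\<dots> \<in> Q"
    using p(2) SQ subring_power_closed[OF Q b] unfolding polys_def
    by (auto intro!: subring_sum_closed[OF Q] subringD(4)[OF Q])
  finally show "x \<in> Q" .
qed

section \<open>The Artin--Rees lemma\<close>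

text \<open>The Rees algebra R[Jt] = \<Oplus> J^n t^n, as polynomials in t.\<close>

definition rees :: "'a::comm_ring_1 set \<Rightarrow> 'a poly set" where
  "rees J = {p. \<forall>n. coeff p n \<in> ideal_pow J n}"

lemma subring_rees:
  assumes J: "is_ideal (J::'a::comm_ring_1 set)"
  shows "subring (rees J)"
  unfolding subring_def rees_def
proof (intro conjI ballI CollectI allI)
  fix n
  show "coeff 0 n \<in> ideal_pow J n" "coeff 1 n \<in> ideal_pow J n" by simp_all
  fix x y assume x: "x \<in> {p. \<forall>n. coeff p n \<in> ideal_pow J n}" and y: "y \<in> {p. \<forall>n. coeff p n \<in> ideal_pow J n}"
  show "coeff (x + y) n \<in> ideal_pow J n" using x y by (simp add: ideal_add[OF ideal_pow_ideal])
  show "coeff (- x) n \<in> ideal_pow J n" using x by (simp add: ideal_uminus[OF ideal_pow_ideal])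
  have "coeff x i * coeff y (n - i) \<in> ideal_pow J n" if "i \<le> n" for i
    using ideal_pow_mult[OF J, of "coeff x i" i "coeff y (n - i)" "n - i"] x y that by simp
  then show "coeff (x * y) n \<in> ideal_pow J n"
    unfolding coeff_mult by (auto intro: ideal_sum_closed[OF ideal_pow_ideal])
qed

text \<open>For J generated by a_1, ..., a_k, the Rees algebra is R[a_1 t, ..., a_k t], obtained by
  adjoining the a_i t one at a time to the constants.\<close>

primrec rees_gen :: "'a::comm_ring_1 list \<Rightarrow> 'a poly set" where
  "rees_gen [] = range (\<lambda>c. monom c 0)"
| "rees_gen (a # as) = adjoin (rees_gen as) (monom a 1)"

lemma ring_hom_on_monom_0: "ring_hom_on A (\<lambda>c. monom c 0)"
  unfolding ring_hom_on_def by (simp add: add_monom mult_monom)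

lemma subring_rees_gen: "subring (rees_gen as)"
  by (induction as) (simp_all add: subring_image[OF subring_UNIV ring_hom_on_monom_0] subring_adjoin)

lemma subring_noetherian_rees_gen:
  "noetherian_ring TYPE('a::comm_ring_1) \<Longrightarrow> subring_noetherian (rees_gen (as :: 'a list))"
  by (induction as)
     (simp_all add: subring_noetherian_image[OF subring_UNIV subring_noetherian_UNIV ring_hom_on_monom_0]
       subring_noetherian_adjoin subring_rees_gen)

lemma monom_0_in_rees_gen: "monom c 0 \<in> rees_gen as"
  by (induction as) (auto intro: adjoin_base[OF subring_rees_gen])

lemma monom_1_in_rees_gen: "a \<in> set as \<Longrightarrow> monom a 1 \<in> rees_gen as"
  by (induction as) (auto intro: adjoin_base[OF subring_rees_gen] adjoin_gen[OF subring_rees_gen])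

lemma monom_in_rees_gen:
  assumes J: "J = ideal_gen (set as)" and c: "c \<in> ideal_pow J n"
  shows "monom c n \<in> rees_gen as"
proof -
  let ?B = "rees_gen as"
  have B: "subring ?B" by (rule subring_rees_gen)
  define X where "X n = {c. monom c n \<in> ?B}" for n
  have X: "is_ideal (X n)" for n
  proof (rule is_idealI)
    show "0 \<in> X n" unfolding X_def using subringD(1)[OF B] by simp
    fix x y assume "x \<in> X n" "y \<in> X n"
    then show "x + y \<in> X n" unfolding X_def using subringD(3)[OF B] by (simp add: add_monom[symmetric])
  next
    fix r x assume "x \<in> X n"
    then have "monom r 0 * monom x n \<in> ?B" unfolding X_def using subringD(4)[OF B monom_0_in_rees_gen] by blast
    then show "r * x \<in> X n" unfolding X_def by (simp add: mult_monom)
  qed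
  have "J \<subseteq> X 1" unfolding J by (rule ideal_gen_least[OF X]) (use monom_1_in_rees_gen in \<open>auto simp: X_def\<close>)
  then have "ideal_pow J n \<subseteq> X n"
  proof (induction n)
    case 0
    show ?case unfolding X_def using monom_0_in_rees_gen by auto
  next
    case (Suc n)
    show ?case unfolding ideal_pow.simps
    proof (rule ideal_prod_least[OF X])
      fix a b assume "a \<in> J" "b \<in> ideal_pow J n"
      then have "monom a 1 * monom b n \<in> ?B" using Suc unfolding X_def by (blast intro: subringD(4)[OF B])
      then show "a * b \<in> X (Suc n)" unfolding X_def by (simp add: mult_monom)
    qed
  qed
  then show ?thesis using c unfolding X_def by blast
qed

lemma rees_gen_eq_rees:
  assumes J: "J = ideal_gen (set (as::'a::comm_ring_1 list))"
  shows "rees_gen as = rees J"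
proof
  have Jid: "is_ideal J" using J ideal_gen_ideal by simp
  have "range (\<lambda>c. monom c 0) \<subseteq> rees J" unfolding rees_def by auto
  moreover have "monom a 1 \<in> rees J" if "a \<in> set as" for a
    using that J ideal_gen_upper ideal_pow_1[OF Jid] unfolding rees_def by auto
  ultimately have "set bs \<subseteq> set as \<Longrightarrow> rees_gen bs \<subseteq> rees J" for bs
    by (induction bs) (use adjoin_subset[OF subring_rees[OF Jid]] in auto)
  then show "rees_gen as \<subseteq> rees J" by simp
  show "rees J \<subseteq> rees_gen as"
  proof
    fix p assume "p \<in> rees J"
    then have "(\<Sum>i\<le>degree p. monom (coeff p i) i) \<in> rees_gen as"
      using monom_in_rees_gen[OF J] unfolding rees_def by (intro subring_sum_closed[OF subring_rees_gen]) blast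
    then show "p \<in> rees_gen as" by (simp add: poly_as_sum_of_monoms)
  qed
qed

lemma subring_noetherian_rees:
  assumes N: "noetherian_ring TYPE('a::comm_ring_1)" and J: "is_ideal (J::'a set)"
  shows "subring_noetherian (rees J)"
proof -
  obtain S where "finite S" "J = ideal_gen S" using N J unfolding noetherian_ring_def by blast
  then obtain as where "J = ideal_gen (set as)" using finite_list by blast
  then show ?thesis using rees_gen_eq_rees subring_noetherian_rees_gen[OF N] by metis
qed

lemma subring_ideal_rees_coeffs_in:
  assumes J: "is_ideal J" and I: "is_ideal I"
  shows "subring_ideal (rees J) {p \<in> rees J. \<forall>n. coeff p n \<in> I}"
  unfolding subring_ideal_def
proof (intro conjI ballI)
  let ?M = "{p \<in> rees J. \<forall>n. coeff p n \<in> I}"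
  show "?M \<subseteq> rees J" by blast
  show "0 \<in> ?M" using subringD(1)[OF subring_rees[OF J]] ideal_zero[OF I] by simp
  fix x y assume "x \<in> ?M" "y \<in> ?M"
  then show "x + y \<in> ?M" using subringD(3)[OF subring_rees[OF J]] ideal_add[OF I] by simp
next
  fix r x assume r: "r \<in> rees J" and x: "x \<in> {p \<in> rees J. \<forall>n. coeff p n \<in> I}"
  then have "coeff (r * x) n \<in> I" for n
    unfolding coeff_mult by (auto intro!: ideal_sum_closed[OF I] ideal_mult_left[OF I])
  then show "r * x \<in> {p \<in> rees J. \<forall>n. coeff p n \<in> I}"
    using r x subringD(4)[OF subring_rees[OF J]] by blast
qed

lemma mult_mem_artin_rees_prod:
  assumes J: "is_ideal J" and I: "is_ideal I"
    and u: "u \<in> ideal_pow J i" and v: "v \<in> ideal_pow J k \<inter> I" and "k \<le> c" "c \<le> i + k"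
  shows "u * v \<in> ideal_prod (ideal_pow J (i + k - c)) (ideal_pow J c \<inter> I)"
proof -
  let ?P = "ideal_prod (ideal_pow J (i + k - c)) (ideal_pow J c \<inter> I)"
  have "ideal_pow J ((i + k - c) + (c - k)) \<subseteq> ideal_colon ?P v"
  proof (rule ideal_pow_add_least[OF ideal_colon_ideal[OF ideal_prod_ideal]])
    fix u1 u2 assume u1: "u1 \<in> ideal_pow J (i + k - c)" and u2: "u2 \<in> ideal_pow J (c - k)"
    have "u2 * v \<in> ideal_pow J c \<inter> I"
      using ideal_pow_mult[OF J u2, of v k] v \<open>k \<le> c\<close> ideal_mult_left[OF I] by auto
    then have "u1 * (u2 * v) \<in> ?P" using u1 ideal_prod_memI by blast
    then show "u1 * u2 \<in> ideal_colon ?P v" unfolding ideal_colon_def by (simp add: mult.assoc)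
  qed
  then show ?thesis using u assms(5,6) unfolding ideal_colon_def by auto
qed

lemma artin_rees_prod_subset:
  assumes J: "is_ideal J" and I: "is_ideal I" and "c \<le> n"
  shows "ideal_prod (ideal_pow J (n - c)) (ideal_pow J c \<inter> I) \<subseteq> ideal_pow J n \<inter> I"
proof (rule ideal_prod_least[OF ideal_Int[OF ideal_pow_ideal I]])
  fix a b assume "a \<in> ideal_pow J (n - c)" "b \<in> ideal_pow J c \<inter> I"
  then show "a * b \<in> ideal_pow J n \<inter> I"
    using ideal_pow_mult[OF J, of a "n - c" b c] ideal_mult_left[OF I] \<open>c \<le> n\<close> by auto
qed

lemma coeff_combination_in_artin_rees_prod:
  assumes J: "is_ideal J" and I: "is_ideal I" and "c \<le> n"
    and gs: "\<And>g k. g \<in> set gs \<Longrightarrow> coeff g k \<in> ideal_pow J k \<inter> I" "\<And>g. g \<in> set gs \<Longrightarrow> degree g \<le> c"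
    and h: "\<And>j. j < length gs \<Longrightarrow> h j \<in> rees J"
  shows "coeff (\<Sum>j<length gs. h j * gs ! j) n \<in> ideal_prod (ideal_pow J (n - c)) (ideal_pow J c \<inter> I)"
proof -
  let ?P = "ideal_prod (ideal_pow J (n - c)) (ideal_pow J c \<inter> I)"
  have P: "is_ideal ?P" by (rule ideal_prod_ideal)
  have "coeff (h j) i * coeff (gs ! j) (n - i) \<in> ?P" if "j < length gs" "i \<le> n" for i j
  proof (cases "n - i \<le> degree (gs ! j)")
    case True
    then have "n - i \<le> c" using gs(2)[of "gs ! j"] that by simp
    then show ?thesis
      using mult_mem_artin_rees_prod[OF J I _ gs(1)[of "gs ! j" "n - i"], of "coeff (h j) i" i c]
        h that \<open>c \<le> n\<close> unfolding rees_def by auto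
  qed (simp add: coeff_eq_0 ideal_zero[OF P])
  then show ?thesis unfolding coeff_sum coeff_mult by (auto intro!: ideal_sum_closed[OF P])
qed

text \<open>The elements of the Rees algebra with coefficients in I form an ideal, generated by finitely
  many polynomials g_j of degree at most c. Writing x t^n (x \<in> J^n \<inter> I) as \<Sum> h_j g_j and comparing
  coefficients of t^n gives x \<in> J^(n-c) (J^c \<inter> I).\<close>

theorem artin_rees:
  assumes N: "noetherian_ring TYPE('a::comm_ring_1)" and J: "is_ideal (J::'a set)" and I: "is_ideal I"
  shows "\<exists>c. \<forall>n\<ge>c. ideal_pow J n \<inter> I = ideal_prod (ideal_pow J (n - c)) (ideal_pow J c \<inter> I)"
proof -
  define M where "M = {p \<in> rees J. \<forall>n. coeff p n \<in> I}"
  obtain gs where gs: "set gs \<subseteq> M" "M = subring_span (rees J) gs"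
    using subring_noetherian_rees[OF N J, unfolded subring_noetherian_def, rule_format,
        OF subring_ideal_rees_coeffs_in[OF J I]]
    unfolding M_def by blast
  define c where "c = Max (insert 0 (degree ` set gs))"
  have gs_coeff: "coeff g k \<in> ideal_pow J k \<inter> I" if "g \<in> set gs" for g k
    using gs(1) that unfolding M_def rees_def by blast
  have gs_degree: "degree g \<le> c" if "g \<in> set gs" for g
    unfolding c_def using that by simp
  have "ideal_pow J n \<inter> I \<subseteq> ideal_prod (ideal_pow J (n - c)) (ideal_pow J c \<inter> I)" if "c \<le> n" for n
  proof
    fix x assume "x \<in> ideal_pow J n \<inter> I"
    then have "monom x n \<in> M" unfolding M_def rees_def by (auto simp: ideal_zero[OF I])
    then obtain h where "monom x n = (\<Sum>j<length gs. h j * gs ! j)" "\<forall>j<length gs. h j \<in> rees J"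
      using gs(2) unfolding subring_span_def by blast
    then show "x \<in> ideal_prod (ideal_pow J (n - c)) (ideal_pow J c \<inter> I)"
      using coeff_combination_in_artin_rees_prod[OF J I that gs_coeff gs_degree, where h = h]
      by (metis coeff_monom)
  qed
  then show ?thesis using artin_rees_prod_subset[OF J I] by (intro exI[of _ c]) blast
qed

lemma artin_rees_number:
  assumes "noetherian_ring TYPE('a::comm_ring_1)" "is_ideal (J::'a set)" "is_ideal I"
    and "n \<ge> artin_rees_number J I"
  shows "ideal_pow J n \<inter> I
    = ideal_prod (ideal_pow J (n - artin_rees_number J I)) (ideal_pow J (artin_rees_number J I) \<inter> I)"
  using LeastI_ex[OF artin_rees[OF assms(1-3)]] assms(4) unfolding artin_rees_number_def by blast

section \<open>The associated graded ring\<close>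

declare ideal_pow.simps(2) [simp del]

abbreviation pow_plus :: "'a::comm_ring_1 set \<Rightarrow> 'a set \<Rightarrow> nat \<Rightarrow> 'a set" where
  "pow_plus J I n \<equiv> ideal_sum (ideal_pow J n) I"

lemma pow_plus_ideal: "is_ideal I \<Longrightarrow> is_ideal (pow_plus J I n)"
  by (rule ideal_sum_ideal[OF ideal_pow_ideal])

lemma pow_plus_upper_pow: "is_ideal I \<Longrightarrow> ideal_pow J n \<subseteq> pow_plus J I n"
  by (rule ideal_sum_upper1)

lemma pow_plus_upper_ideal: "is_ideal I \<Longrightarrow> I \<subseteq> pow_plus J I n"
  by (rule ideal_sum_upper2[OF ideal_pow_ideal])

lemma pow_plus_Suc_subset: "is_ideal J \<Longrightarrow> pow_plus J I (Suc n) \<subseteq> pow_plus J I n"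
  by (rule ideal_sum_mono[OF ideal_pow_Suc_subset]) auto

lemma pow_plus_mult:
  assumes J: "is_ideal J" and I: "is_ideal I" and a: "a \<in> pow_plus J I n" and b: "b \<in> pow_plus J I m"
  shows "a * b \<in> pow_plus J I (n + m)"
proof -
  obtain u i where u: "u \<in> ideal_pow J n" "i \<in> I" "a = u + i" using a by (rule ideal_sum_memE)
  obtain v i' where v: "v \<in> ideal_pow J m" "i' \<in> I" "b = v + i'" using b by (rule ideal_sum_memE)
  have "a * b = u * v + (u * i' + i * b)" using u(3) v(3) by (simp add: algebra_simps)
  moreover have "u * i' + i * b \<in> I"
    using ideal_add[OF I ideal_mult_left[OF I v(2)] ideal_mult_right[OF I u(2)]] .
  ultimately show ?thesis using ideal_pow_mult[OF J u(1) v(1)] ideal_sum_memI by metis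
qed

lemma pow_plus_decompose:
  assumes I: "is_ideal I" and x: "x \<in> pow_plus J I n"
  obtains j where "j \<in> ideal_pow J n" "x - j \<in> pow_plus J I (Suc n)"
proof -
  obtain j i where "j \<in> ideal_pow J n" "i \<in> I" "x = j + i" using x by (rule ideal_sum_memE)
  then show ?thesis using that pow_plus_upper_ideal[OF I, of J "Suc n"] by auto
qed

lemma coset_eq_iff:
  assumes K: "is_ideal K"
  shows "coset x K = coset y K \<longleftrightarrow> x - y \<in> K"
proof
  assume "coset x K = coset y K"
  moreover have "x \<in> coset x K" unfolding coset_def using ideal_zero[OF K] by force
  ultimately obtain k where "k \<in> K" "x = y + k" unfolding coset_def by blast
  then show "x - y \<in> K" by simp
next
  have sub: "coset x K \<subseteq> coset y K" if d: "x - y \<in> K" for x y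
  proof
    fix z assume "z \<in> coset x K"
    then obtain k where k: "k \<in> K" "z = x + k" unfolding coset_def by blast
    then have "z = y + ((x - y) + k)" "(x - y) + k \<in> K" using ideal_add[OF K d k(1)] by simp_all
    then show "z \<in> coset y K" unfolding coset_def by blast
  qed
  assume d: "x - y \<in> K"
  then have "y - x \<in> K" using ideal_uminus[OF K d] by simp
  then show "coset x K = coset y K" using sub d by blast
qed

lemma gr_class_eq_iff:
  "is_ideal I \<Longrightarrow> gr_class J I n x = gr_class J I n y \<longleftrightarrow> x - y \<in> pow_plus J I (Suc n)"
  unfolding gr_class_def by (rule coset_eq_iff[OF pow_plus_ideal])

locale same_gr_slices =
  fixes J I I' :: "'a::comm_ring_1 set"
  assumes J: "is_ideal J" and I: "is_ideal I" and I': "is_ideal I'"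
    and slices_eq: "\<And>n. ideal_pow J n \<inter> pow_plus J I (Suc n) = ideal_pow J n \<inter> pow_plus J I' (Suc n)"
begin

definition gr_map :: "nat \<Rightarrow> 'a set \<Rightarrow> 'a set" where
  "gr_map n X = gr_class J I' n (SOME j. j \<in> ideal_pow J n \<and> X = gr_class J I n j)"

lemma pow_diff_in_slice:
  "j \<in> ideal_pow J n \<Longrightarrow> k \<in> ideal_pow J n \<Longrightarrow>
    j - k \<in> pow_plus J I (Suc n) \<longleftrightarrow> j - k \<in> pow_plus J I' (Suc n)"
  using slices_eq[of n] ideal_diff[OF ideal_pow_ideal] by blast

lemma gr_map_class:
  assumes j: "j \<in> ideal_pow J n" and xj: "x - j \<in> pow_plus J I (Suc n)"
  shows "gr_map n (gr_class J I n x) = gr_class J I' n j"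
proof -
  let ?P = "\<lambda>j. j \<in> ideal_pow J n \<and> gr_class J I n x = gr_class J I n j"
  have "?P j" using j xj gr_class_eq_iff[OF I] by blast
  then have j0: "?P (SOME j. ?P j)" by (rule someI)
  then have "j - (SOME j. ?P j) \<in> pow_plus J I (Suc n)"
    using \<open>?P j\<close> gr_class_eq_iff[OF I] by metis
  then have "gr_class J I' n j = gr_class J I' n (SOME j. ?P j)"
    using pow_diff_in_slice j j0 gr_class_eq_iff[OF I'] by blast
  then show ?thesis unfolding gr_map_def by simp
qed

lemma gr_map_classE:
  assumes x: "x \<in> pow_plus J I n" and x': "gr_map n (gr_class J I n x) = gr_class J I' n x'"
  obtains j where "j \<in> ideal_pow J n" "x - j \<in> pow_plus J I (Suc n)" "j - x' \<in> pow_plus J I' (Suc n)"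
proof -
  obtain j where j: "j \<in> ideal_pow J n" "x - j \<in> pow_plus J I (Suc n)"
    using pow_plus_decompose[OF I x] .
  then have "gr_class J I' n j = gr_class J I' n x'" using gr_map_class x' by simp
  then show ?thesis using that j gr_class_eq_iff[OF I'] by blast
qed

lemma gr_map_inj_on: "inj_on (gr_map n) (gr_comp J I n)"
proof (rule inj_onI)
  fix X Y assume "X \<in> gr_comp J I n" "Y \<in> gr_comp J I n" and XY: "gr_map n X = gr_map n Y"
  then obtain x y where xy: "x \<in> pow_plus J I n" "y \<in> pow_plus J I n"
    and X: "X = gr_class J I n x" and Y: "Y = gr_class J I n y" unfolding gr_comp_def by blast
  obtain j where j: "j \<in> ideal_pow J n" "x - j \<in> pow_plus J I (Suc n)"
    using pow_plus_decompose[OF I xy(1)] .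
  obtain k where k: "k \<in> ideal_pow J n" "y - k \<in> pow_plus J I (Suc n)"
    using pow_plus_decompose[OF I xy(2)] .
  have "gr_class J I' n j = gr_class J I' n k" using XY gr_map_class j k X Y by metis
  then have "j - k \<in> pow_plus J I (Suc n)" using gr_class_eq_iff[OF I'] pow_diff_in_slice j k by blast
  then have "(x - j) + (j - k) - (y - k) \<in> pow_plus J I (Suc n)"
    using j k ideal_diff[OF pow_plus_ideal[OF I] ideal_add[OF pow_plus_ideal[OF I]]] by blast
  then show "X = Y" using X Y gr_class_eq_iff[OF I] by simp
qed

lemma gr_map_image: "gr_map n ` gr_comp J I n = gr_comp J I' n"
proof
  show "gr_map n ` gr_comp J I n \<subseteq> gr_comp J I' n"
  proof
    fix Y assume "Y \<in> gr_map n ` gr_comp J I n"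
    then obtain x where x: "x \<in> pow_plus J I n" "Y = gr_map n (gr_class J I n x)"
      unfolding gr_comp_def by blast
    obtain j where "j \<in> ideal_pow J n" "x - j \<in> pow_plus J I (Suc n)"
      using pow_plus_decompose[OF I x(1)] .
    then show "Y \<in> gr_comp J I' n"
      using gr_map_class x(2) pow_plus_upper_pow[OF I'] unfolding gr_comp_def by blast
  qed
  show "gr_comp J I' n \<subseteq> gr_map n ` gr_comp J I n"
  proof
    fix Y assume "Y \<in> gr_comp J I' n"
    then obtain y where y: "y \<in> pow_plus J I' n" "Y = gr_class J I' n y" unfolding gr_comp_def by blast
    obtain j where j: "j \<in> ideal_pow J n" "y - j \<in> pow_plus J I' (Suc n)"
      using pow_plus_decompose[OF I' y(1)] .
    have "gr_map n (gr_class J I n j) = gr_class J I' n j"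
      using gr_map_class[OF j(1)] ideal_zero[OF pow_plus_ideal[OF I, of J "Suc n"]] by simp
    also have "\<dots> = Y" using y j gr_class_eq_iff[OF I'] by blast
    finally show "Y \<in> gr_map n ` gr_comp J I n"
      using j(1) pow_plus_upper_pow[OF I] unfolding gr_comp_def by blast
  qed
qed

lemma gr_map_add:
  assumes x: "x \<in> pow_plus J I n" and y: "y \<in> pow_plus J I n"
    and x': "gr_map n (gr_class J I n x) = gr_class J I' n x'"
    and y': "gr_map n (gr_class J I n y) = gr_class J I' n y'"
  shows "gr_map n (gr_class J I n (x + y)) = gr_class J I' n (x' + y')"
proof -
  obtain j where j: "j \<in> ideal_pow J n" "x - j \<in> pow_plus J I (Suc n)" "j - x' \<in> pow_plus J I' (Suc n)"
    using gr_map_classE[OF x x'] .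
  obtain k where k: "k \<in> ideal_pow J n" "y - k \<in> pow_plus J I (Suc n)" "k - y' \<in> pow_plus J I' (Suc n)"
    using gr_map_classE[OF y y'] .
  have "(x - j) + (y - k) \<in> pow_plus J I (Suc n)" by (rule ideal_add[OF pow_plus_ideal[OF I] j(2) k(2)])
  then have "gr_map n (gr_class J I n (x + y)) = gr_class J I' n (j + k)"
    using gr_map_class[OF ideal_add[OF ideal_pow_ideal j(1) k(1)]] by (simp add: algebra_simps)
  moreover have "(j - x') + (k - y') \<in> pow_plus J I' (Suc n)"
    by (rule ideal_add[OF pow_plus_ideal[OF I'] j(3) k(3)])
  then have "gr_class J I' n (j + k) = gr_class J I' n (x' + y')"
    using gr_class_eq_iff[OF I'] by (simp add: algebra_simps)
  ultimately show ?thesis by simp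
qed

text \<open>Both products are compared with j k through x y - j k = (x - j) y + j (y - k).\<close>

lemma gr_map_mult:
  assumes x: "x \<in> pow_plus J I m" and y: "y \<in> pow_plus J I n" and y'I': "y' \<in> pow_plus J I' n"
    and x': "gr_map m (gr_class J I m x) = gr_class J I' m x'"
    and y': "gr_map n (gr_class J I n y) = gr_class J I' n y'"
  shows "gr_map (m + n) (gr_class J I (m + n) (x * y)) = gr_class J I' (m + n) (x' * y')"
proof -
  obtain j where j: "j \<in> ideal_pow J m" "x - j \<in> pow_plus J I (Suc m)" "j - x' \<in> pow_plus J I' (Suc m)"
    using gr_map_classE[OF x x'] .
  obtain k where k: "k \<in> ideal_pow J n" "y - k \<in> pow_plus J I (Suc n)" "k - y' \<in> pow_plus J I' (Suc n)"
    using gr_map_classE[OF y y'] .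
  have "(x - j) * y \<in> pow_plus J I (Suc (m + n))"
    using pow_plus_mult[OF J I j(2) y] by (simp only: add_Suc)
  moreover have "j * (y - k) \<in> pow_plus J I (Suc (m + n))"
    using pow_plus_mult[OF J I _ k(2)] pow_plus_upper_pow[OF I] j(1) by (simp only: add_Suc_right) blast
  ultimately have "(x - j) * y + j * (y - k) \<in> pow_plus J I (Suc (m + n))"
    by (rule ideal_add[OF pow_plus_ideal[OF I]])
  then have xy: "gr_map (m + n) (gr_class J I (m + n) (x * y)) = gr_class J I' (m + n) (j * k)"
    using gr_map_class[OF ideal_pow_mult[OF J j(1) k(1)]] by (simp add: algebra_simps)
  have "(j - x') * y' \<in> pow_plus J I' (Suc (m + n))"
    using pow_plus_mult[OF J I' j(3) y'I'] by (simp only: add_Suc)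
  moreover have "j * (k - y') \<in> pow_plus J I' (Suc (m + n))"
    using pow_plus_mult[OF J I' _ k(3)] pow_plus_upper_pow[OF I'] j(1) by (simp only: add_Suc_right) blast
  ultimately have "(j - x') * y' + j * (k - y') \<in> pow_plus J I' (Suc (m + n))"
    by (rule ideal_add[OF pow_plus_ideal[OF I']])
  then have "gr_class J I' (m + n) (j * k) = gr_class J I' (m + n) (x' * y')"
    using gr_class_eq_iff[OF I'] by (simp add: algebra_simps)
  with xy show ?thesis by simp
qed

lemma gr_iso: "gr_iso J I I'"
  unfolding gr_iso_def
proof (intro exI[of _ gr_map] conjI allI impI)
  show "bij_betw (gr_map n) (gr_comp J I n) (gr_comp J I' n)" for n
    unfolding bij_betw_def using gr_map_inj_on gr_map_image by blast
  show "gr_map 0 (gr_class J I 0 1) = gr_class J I' 0 1"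
    using gr_map_class[of 1 0 1] ideal_zero[OF pow_plus_ideal[OF I, of J 1]] by simp
qed (use gr_map_add gr_map_mult in blast)+

end

lemma gr_iso_if_same_slices:
  assumes "is_ideal J" "is_ideal I" "is_ideal I'"
    and "\<And>n. ideal_pow J n \<inter> pow_plus J I (Suc n) = ideal_pow J n \<inter> pow_plus J I' (Suc n)"
  shows "gr_iso J I I'"
  using assms by (intro same_gr_slices.gr_iso) (unfold_locales)

section \<open>Perturbations\<close>

lemma perturbation_mono: "Q \<subseteq> Q' \<Longrightarrow> perturbation Q fs fs' \<Longrightarrow> perturbation Q' fs fs'"
  unfolding perturbation_def by blast

lemma mult_mem_pow_plus_perturbed:
  assumes J: "is_ideal J" and pert: "perturbation (ideal_pow J N) fs fs'"
    and u: "u \<in> ideal_pow J k" and v: "v \<in> ideal_of_list fs"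
  shows "u * v \<in> pow_plus J (ideal_of_list fs') (k + N)"
proof -
  let ?B = "pow_plus J (ideal_of_list fs') (k + N)"
  have B: "is_ideal ?B" by (rule pow_plus_ideal[OF ideal_of_list_ideal])
  define X where "X = {v. \<forall>u\<in>ideal_pow J k. u * v \<in> ?B}"
  have X: "is_ideal X" unfolding X_def
    by (rule is_idealI)
       (auto simp: distrib_left mult.left_commute intro: ideal_zero[OF B] ideal_add[OF B] ideal_mult_left[OF B])
  have "f \<in> X" if "f \<in> set fs" for f
  proof -
    obtain i where i: "i < length fs" "f = fs ! i" using \<open>f \<in> set fs\<close> by (auto simp: in_set_conv_nth)
    then have d: "fs' ! i - f \<in> ideal_pow J N" and "i < length fs'"
      using pert unfolding perturbation_def by auto
    then have "fs' ! i \<in> ideal_of_list fs'"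
      using ideal_gen_upper unfolding ideal_of_list_def by (metis nth_mem subsetD)
    have "u * f = u * fs' ! i - u * (fs' ! i - f)" for u by (simp add: algebra_simps)
    moreover have "u * fs' ! i \<in> ?B" for u
      using \<open>fs' ! i \<in> ideal_of_list fs'\<close> ideal_mult_left[OF ideal_of_list_ideal]
        pow_plus_upper_ideal[OF ideal_of_list_ideal] by blast
    moreover have "u * (fs' ! i - f) \<in> ?B" if "u \<in> ideal_pow J k" for u
      using ideal_pow_mult[OF J that d] pow_plus_upper_pow[OF ideal_of_list_ideal] by blast
    ultimately show "f \<in> X" unfolding X_def using ideal_diff[OF B] by auto
  qed
  then have "ideal_of_list fs \<subseteq> X" unfolding ideal_of_list_def by (intro ideal_gen_least[OF X]) blast
  then show ?thesis using u v unfolding X_def by blast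
qed

lemma pow_inter_subset_perturbed:
  assumes J: "is_ideal J" and pert: "perturbation (ideal_pow J N) fs fs'" and cN: "c < N"
    and AR: "\<And>n. n \<ge> c \<Longrightarrow> ideal_pow J n \<inter> ideal_of_list fs
                 = ideal_prod (ideal_pow J (n - c)) (ideal_pow J c \<inter> ideal_of_list fs)"
  shows "ideal_pow J n \<inter> ideal_of_list fs \<subseteq> pow_plus J (ideal_of_list fs') (Suc n)"
proof -
  let ?B = "pow_plus J (ideal_of_list fs')"
  have B_mono: "?B (k + N) \<subseteq> ?B (Suc n)" if "Suc n \<le> k + N" for k
    using that by (intro ideal_sum_mono ideal_pow_antimono[OF J]) auto
  show ?thesis
  proof (cases "c \<le> n")
    case True
    have "ideal_prod (ideal_pow J (n - c)) (ideal_pow J c \<inter> ideal_of_list fs) \<subseteq> ?B (Suc n)"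
    proof (rule ideal_prod_least[OF pow_plus_ideal[OF ideal_of_list_ideal]])
      fix a b assume "a \<in> ideal_pow J (n - c)" "b \<in> ideal_pow J c \<inter> ideal_of_list fs"
      then have "a * b \<in> ?B (n - c + N)" using mult_mem_pow_plus_perturbed[OF J pert] by blast
      moreover have "Suc n \<le> n - c + N" using True cN by simp
      ultimately show "a * b \<in> ?B (Suc n)" using B_mono by blast
    qed
    then show ?thesis using AR[OF True] by simp
  next
    case False
    then show ?thesis
      using mult_mem_pow_plus_perturbed[OF J pert, of 1 0] B_mono[of 0] cN by auto
  qed
qed

lemma pow_inter_pow_plus_subset:
  assumes J: "is_ideal J" and I: "is_ideal I" and I': "is_ideal I'"
    and sub: "ideal_pow J n \<inter> I \<subseteq> pow_plus J I' (Suc n)"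
  shows "ideal_pow J n \<inter> pow_plus J I (Suc n) \<subseteq> pow_plus J I' (Suc n)"
proof
  fix x assume x: "x \<in> ideal_pow J n \<inter> pow_plus J I (Suc n)"
  then obtain j i where ji: "j \<in> ideal_pow J (Suc n)" "i \<in> I" "x = j + i" by (blast elim: ideal_sum_memE)
  then have "i \<in> ideal_pow J n"
    using x ideal_diff[OF ideal_pow_ideal, of x J n j] ideal_pow_Suc_subset[OF J] by auto
  then have "i \<in> pow_plus J I' (Suc n)" using sub ji(2) by blast
  moreover have "j \<in> pow_plus J I' (Suc n)" using ji(1) pow_plus_upper_pow[OF I'] by blast
  ultimately show "x \<in> pow_plus J I' (Suc n)" using ji(3) ideal_add[OF pow_plus_ideal[OF I']] by auto
qed

section \<open>Equal lengths force equal slices\<close>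

lemma slice_chain_of_pow_plus_chain:
  assumes J: "is_ideal J" and I: "is_ideal I"
    and chain: "ideal_chain (pow_plus J I (Suc n)) (pow_plus J I n) u"
  shows "ideal_chain (ideal_pow J n \<inter> pow_plus J I (Suc n)) (ideal_pow J n) u"
proof -
  have "pow_plus J I n = ideal_sum (ideal_pow J n) (pow_plus J I (Suc n))"
  proof
    show "pow_plus J I n \<subseteq> ideal_sum (ideal_pow J n) (pow_plus J I (Suc n))"
      by (rule ideal_sum_mono[OF order_refl pow_plus_upper_ideal[OF I]])
    show "ideal_sum (ideal_pow J n) (pow_plus J I (Suc n)) \<subseteq> pow_plus J I n"
      by (rule ideal_sum_least[OF pow_plus_ideal[OF I] pow_plus_upper_pow[OF I] pow_plus_Suc_subset[OF J]])
  qed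
  then have "ideal_chain (pow_plus J I (Suc n) \<inter> ideal_pow J n) (ideal_pow J n) u"
    using ideal_chain_inter[OF _ ideal_pow_ideal] chain by metis
  then show ?thesis by (simp add: Int_commute)
qed

lemma pow_plus_chain_of_slice_chain:
  assumes J: "is_ideal J" and I: "is_ideal I"
    and chain: "ideal_chain (ideal_pow J n \<inter> pow_plus J I (Suc n)) (ideal_pow J n) u"
  shows "ideal_chain (pow_plus J I (Suc n)) (pow_plus J I n) u"
proof -
  let ?U = "ideal_pow J n \<inter> pow_plus J I (Suc n)"
  have "ideal_sum ?U I = pow_plus J I (Suc n)"
  proof
    show "ideal_sum ?U I \<subseteq> pow_plus J I (Suc n)"
      using pow_plus_upper_ideal[OF I] by (intro ideal_sum_least[OF pow_plus_ideal[OF I]]) auto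
    show "pow_plus J I (Suc n) \<subseteq> ideal_sum ?U I"
      using ideal_pow_Suc_subset[OF J] pow_plus_upper_pow[OF I, of J "Suc n"]
      by (intro ideal_sum_mono) auto
  qed
  moreover have "ideal_chain (ideal_sum ?U I) (pow_plus J I n) u"
    using pow_plus_upper_ideal[OF I] by (intro ideal_chain_sum[OF chain I]) auto
  ultimately show ?thesis by simp
qed

lemma slice_eq_if_quot_length_eq:
  assumes J: "is_ideal J" and I: "is_ideal I" and I': "is_ideal I'"
    and sub: "ideal_pow J n \<inter> pow_plus J I (Suc n) \<subseteq> pow_plus J I' (Suc n)"
    and fin: "\<And>n. quot_length (pow_plus J I n) \<noteq> \<infinity>"
    and len: "\<And>n. quot_length (pow_plus J I n) = quot_length (pow_plus J I' n)"
  shows "ideal_pow J n \<inter> pow_plus J I (Suc n) = ideal_pow J n \<inter> pow_plus J I' (Suc n)"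
proof (rule ccontr)
  let ?A = "pow_plus J I" and ?B = "pow_plus J I'" and ?Jn = "ideal_pow J n"
  assume "?Jn \<inter> ?A (Suc n) \<noteq> ?Jn \<inter> ?B (Suc n)"
  then have proper: "?Jn \<inter> ?A (Suc n) \<subset> ?Jn \<inter> ?B (Suc n)" using sub by blast
  obtain kb where kb: "ideal_chain (?B (Suc n)) UNIV kb" "quot_length (?B (Suc n)) = enat kb"
    using quot_length_attained[OF pow_plus_ideal[OF I']] fin len by metis
  obtain u v where uv: "kb \<le> u + v" "ideal_chain (?B (Suc n)) (?B n) u" "ideal_chain (?B n) UNIV v"
    using ideal_chain_split[OF kb(1) pow_plus_Suc_subset[OF J] _ pow_plus_ideal[OF I']] by blast
  have "ideal_chain (?Jn \<inter> ?A (Suc n)) ?Jn (Suc u)"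
    using slice_chain_of_pow_plus_chain[OF J I' uv(2)] proper
    by (rule ideal_chain_Cons[OF _ _ ideal_Int[OF ideal_pow_ideal pow_plus_ideal[OF I]]])
  then have "ideal_chain (?A (Suc n)) (?A n) (Suc u)" by (rule pow_plus_chain_of_slice_chain[OF J I])
  moreover obtain ka where ka: "ideal_chain (?A n) UNIV ka" "quot_length (?A n) = enat ka"
    using quot_length_attained[OF pow_plus_ideal[OF I] fin] by blast
  ultimately have "enat (Suc u + ka) \<le> quot_length (?A (Suc n))"
    using ideal_chain_append quot_length_ge by metis
  moreover have "enat v \<le> quot_length (?A n)" using quot_length_ge[OF uv(3)] len by simp
  ultimately show False using uv(1) ka(2) kb(2) len by simp
qed

theorem proposition4p7:
  fixes m J :: "'a::comm_ring_1 set" and fs :: "'a list" and p :: nat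
  assumes "noetherian_ring TYPE('a)"
    and "local_ring_max m"
    and "is_ideal J" and "m_primary m J"
    and "filter_regular m fs"
    and "hilbert_perturbation_index J fs p"
  shows "\<forall>fs'. perturbation (ideal_pow J (max p (artin_rees_number J (ideal_of_list fs) + 1))) fs fs'
           \<longrightarrow> gr_iso J (ideal_of_list fs) (ideal_of_list fs')"
proof (intro allI impI)
  note N = assms(1) and J = assms(3)
  fix fs' :: "'a list"
  let ?I = "ideal_of_list fs" and ?I' = "ideal_of_list fs'"
  assume pert: "perturbation (ideal_pow J (max p (artin_rees_number J ?I + 1))) fs fs'"
  have I: "is_ideal ?I" and I': "is_ideal ?I'" by (rule ideal_of_list_ideal)+
  have "perturbation (ideal_pow J p) fs fs'"
    using perturbation_mono[OF ideal_pow_antimono[OF J] pert] by simp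
  then have len: "quot_length (pow_plus J ?I n) = quot_length (pow_plus J ?I' n)" for n
    using assms(6) ideal_sum_commute unfolding hilbert_perturbation_index_def hpi_property_def by metis
  have fin: "quot_length (pow_plus J ?I n) \<noteq> \<infinity>" for n
    by (rule quot_length_finite[OF N assms(2) J assms(4) pow_plus_ideal[OF I] pow_plus_upper_pow[OF I]])
  have "ideal_pow J n \<inter> ?I \<subseteq> pow_plus J ?I' (Suc n)" for n
    using pow_inter_subset_perturbed[OF J pert _ artin_rees_number[OF N J I]] by simp
  then have "ideal_pow J n \<inter> pow_plus J ?I (Suc n) = ideal_pow J n \<inter> pow_plus J ?I' (Suc n)" for n
    using slice_eq_if_quot_length_eq[OF J I I' pow_inter_pow_plus_subset[OF J I I'] fin len] by blast
  then show "gr_iso J ?I ?I'" by (rule gr_iso_if_same_slices[OF J I I'])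
qed

end
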